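(* For $\mathbf{q}, \mathbf{r}\in(\mathbb{Z}_{\ge0})^{n}$ with $n\ge1$, we have \[\frac{d}{d\sigma}F_{\mathbf{q}}^{\mathbf{r}}(\sigma) = i(i\sigma)^{q_{n}}\left(\mathrm{Li}_{1}(e^{i\sigma})\right)^{r_{n}}F_{\mathbf{q}_{-}}^{\mathbf{r}_{-}}(\sigma).\]
   Context: Notation: $|\mathbf{k}|=k_1+\dots+k_n$, $\mathrm{dep}(\mathbf{k})=n$, $\mathbf{k}_{-}=(k_1,\dots,k_{n-1})$. $\mathrm{Li}_{\mathbf{k}}(z)=\sum_{0<m_1<\dots<m_n} z^{m_n}/(m_1^{k_1}\cdots m_n^{k_n})$, $\mathrm{Li}_\emptyset=1$; $\sigma\in[0,2\pi]$. Let $B_{\mathbf{q}}=\frac{1}{|\mathbf{q}|+n}B_{\mathbf{q}_-}$, $B_\emptyset=1$; $C_{\mathbf{q}}^{\mathbf{j}}=(-1)^{j_n}\frac{(|\mathbf{q}|-|\mathbf{j}_-|)!}{(|\mathbf{q}|-|\mathbf{j}|)!}C_{\mathbf{q}_-}^{\mathbf{j}_-}$, $C_\emptyset^\emptyset=1$. Write $\mathbf{j}\preceq\mathbf{q}$ if $j_1+\dots+j_s\le q_1+\dots+q_s$ for all $s$. Let $\mathfrak{H}=\mathbb{Q}\langle e_0,e_1\rangle$, $\mathfrak{H}^1=\mathbb{Q}+e_1\mathfrak{H}$, with shuffle product $\sqcup\!\sqcup$: $w\sqcup\!\sqcup 1=1\sqcup\!\sqcup w=w$, $u_1w_1\sqcup\!\sqcup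 u_2w_2=u_1(w_1\sqcup\!\sqcup u_2w_2)+u_2(u_1w_1\sqcup\!\sqcup w_2)$ ($u_i\in\{e_0,e_1\}$), $\mathbb{Q}$-bilinear. Define $w_{\mathbf{j}}^{\mathbf{r}}=(w_{\mathbf{j}_-}^{\mathbf{r}_-}\sqcup\!\sqcup e_1^{\sqcup\!\sqcup r_n})e_0^{1+j_n}$, $w_\emptyset^\emptyset=1$. $L(\cdot;z):\mathfrak{H}^1\to\mathbb{C}$ is $\mathbb{Q}$-linear with $L(e_1e_0^{k_1-1}\cdots e_1e_0^{k_n-1};z)=\mathrm{Li}_{k_1,\dots,k_n}(z)$, $L(1;z)=1$. For $\mathbf{q},\mathbf{r}\in(\mathbb{Z}_{\ge0})^n$ write $\mathbf{r}=(\{0\}^{n'},r''_1,\dots,r''_{n''})=(\mathbf{r}',\mathbf{r}'')$ with $r''_1\ge1$, $\mathbf{q}=(\mathbf{q}',\mathbf{q}'')$ with $\mathbf{q}'$ of length $n'$, $\overline{\mathbf{q}}=(|\mathbf{q}'|+n'+q''_1,q''_2,\dots,q''_{n''})$ (or $\emptyset$). Define $f_{\mathbf{q}}^{\mathbf{r}}(\sigma)=B_{\mathbf{q}'}\sum_{\mathbf{j}\preceq\overline{\mathbf{q}}}C_{\overline{\mathbf{q}}}^{\mathbf{j}}(i\sigma)^{|\mathbf{q}|+n'-|\mathbf{j}|}L(w_{\mathbf{j}}^{\mathbf{r}''};e^{i\sigma})$ (sum over $\mathbf{j}\in(\mathbb{Z}_{\ge0})^{n''}$), and $F_{\mathbf{q}}^{\mathbf{r}}(\sigma)=\sum(-1)^{h-1}\Bigl(\prod_{j=1}^{h-1}f_{\mathbf{q}^{(j)}}^{\mathbf{r}^{(j)}}(0)\Bigr)\bigl(f_{\mathbf{q}^{(h)}}^{\mathbf{r}^{(h)}}(\sigma)-f_{\mathbf{q}^{(h)}}^{\mathbf{r}^{(h)}}(0)\bigr)$,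 summed over all decompositions $\mathbf{q}=(\mathbf{q}^{(1)},\dots,\mathbf{q}^{(h)})$, $\mathbf{r}=(\mathbf{r}^{(1)},\dots,\mathbf{r}^{(h)})$ into consecutive blocks with $\mathrm{dep}(\mathbf{q}^{(j)})=\mathrm{dep}(\mathbf{r}^{(j)})\ge1$; $F_\emptyset^\emptyset=1$. It is known that $\frac{d}{d\sigma}f_{\mathbf{q}}^{\mathbf{r}}(\sigma)=i(i\sigma)^{q_n}(\mathrm{Li}_1(e^{i\sigma}))^{r_n}f_{\mathbf{q}_-}^{\mathbf{r}_-}(\sigma)$ for $n\ge1$. *)

theory Defs
  imports Complex_Main
begin

text \<open>Truncated nested harmonic sums, indices given in reversed order:
  hsum [k_n', ..., k_1] N = sum over 0<m_1<...<m_n' <= N of 1/(m_1^k_1 ... m_n'^k_n').\<close>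
fun hsum :: "nat list \<Rightarrow> nat \<Rightarrow> complex" where
  "hsum [] N = 1"
| "hsum (k # ks) N = (\<Sum>m\<in>{1..N}. hsum ks (m - 1) / of_nat m ^ k)"

text \<open>Li_k(z) = sum over 0<m_1<...<m_n of z^(m_n)/(m_1^k_1 ... m_n^k_n),
  summed in the order of the outermost index m_n; Li_[] = 1.\<close>
definition Li :: "nat list \<Rightarrow> complex \<Rightarrow> complex" where
  "Li ks z = (if ks = [] then 1 else
     (\<Sum>m. z ^ Suc m / of_nat (Suc m) ^ last ks * hsum (tl (rev ks)) m))"

datatype letter = E0 | E1

type_synonym word = "letter list"

text \<open>Elements of the algebra H are represented as formal Q-linear combinations
  (lists of coefficient/word pairs).\<close>
type_synonym hpoly = "(rat \<times> word) list"

fun shuf :: "word \<Rightarrow> word \<Rightarrow> word list" where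
  "shuf [] v = [v]"
| "shuf u [] = [u]"
| "shuf (a # u) (b # v) = map ((#) a) (shuf u (b # v)) @ map ((#) b) (shuf (a # u) v)"

definition shuffle :: "hpoly \<Rightarrow> hpoly \<Rightarrow> hpoly" where
  "shuffle P Q = concat (map (\<lambda>(c, u). concat (map (\<lambda>(d, v). map (\<lambda>w. (c * d, w)) (shuf u v)) Q)) P)"

fun e1pow :: "nat \<Rightarrow> hpoly" where
  "e1pow 0 = [(1, [])]"
| "e1pow (Suc r) = shuffle (e1pow r) [(1, [E1])]"

text \<open>w_j^r, with j and r given in reversed order.\<close>
fun wrev :: "nat list \<Rightarrow> nat list \<Rightarrow> hpoly" where
  "wrev (j # js) (r # rs) =
     map (\<lambda>(c, u). (c, u @ replicate (Suc j) E0)) (shuffle (wrev js rs) (e1pow r))"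
| "wrev _ _ = [(1, [])]"

definition wjr :: "nat list \<Rightarrow> nat list \<Rightarrow> hpoly" where
  "wjr j r = wrev (rev j) (rev r)"

text \<open>Index of a word e_1 e_0^(k_1-1) ... e_1 e_0^(k_n-1) (computed from the reversed word).\<close>
fun idx_rev :: "nat \<Rightarrow> word \<Rightarrow> nat list" where
  "idx_rev acc [] = []"
| "idx_rev acc (E0 # w) = idx_rev (Suc acc) w"
| "idx_rev acc (E1 # w) = Suc acc # idx_rev 0 w"

definition word_idx :: "word \<Rightarrow> nat list" where
  "word_idx w = rev (idx_rev 0 (rev w))"

text \<open>L on words of H^1 = Q + e_1 H (value 0 outside H^1, never used).\<close>
definition Lword :: "word \<Rightarrow> complex \<Rightarrow> complex" where
  "Lword w z = (if w = [] then 1 else if hd w = E1 then Li (word_idx w) z else 0)"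

definition L :: "hpoly \<Rightarrow> complex \<Rightarrow> complex" where
  "L P z = (\<Sum>(c, u)\<leftarrow>P. of_rat c * Lword u z)"

fun Brev :: "nat list \<Rightarrow> complex" where
  "Brev [] = 1"
| "Brev (q # qs) = Brev qs / of_nat (sum_list (q # qs) + length (q # qs))"

definition B :: "nat list \<Rightarrow> complex" where
  "B q = Brev (rev q)"

fun Crev :: "nat list \<Rightarrow> nat list \<Rightarrow> complex" where
  "Crev (q # qs) (j # js) =
     (-1) ^ j * of_nat (fact (sum_list (q # qs) - sum_list js))
       / of_nat (fact (sum_list (q # qs) - sum_list (j # js))) * Crev qs js"
| "Crev _ _ = 1"

definition C :: "nat list \<Rightarrow> nat list \<Rightarrow> complex" where
  "C q j = Crev (rev q) (rev j)"

definition prec :: "nat list \<Rightarrow> nat list \<Rightarrow> bool" where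
  "prec j q \<longleftrightarrow> length j = length q \<and> (\<forall>s\<le>length q. sum_list (take s j) \<le> sum_list (take s q))"

definition f :: "nat list \<Rightarrow> nat list \<Rightarrow> real \<Rightarrow> complex" where
  "f q r \<sigma> = (let n' = length (takeWhile (\<lambda>x. x = 0) r);
                 r'' = drop n' r; q' = take n' q; q'' = drop n' q;
                 qbar = (if q'' = [] then [] else (sum_list q' + n' + hd q'') # tl q'')
             in B q' * (\<Sum>j\<in>{j. prec j qbar}.
                  C qbar j * (\<i> * complex_of_real \<sigma>) ^ (sum_list q + n' - sum_list j)
                    * L (wjr j r'') (exp (\<i> * complex_of_real \<sigma>))))"

definition comps :: "nat \<Rightarrow> nat list set" where
  "comps n = {c. (\<forall>x\<in>set c. 0 < x) \<and> sum_list c = n}"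

fun blocks :: "nat list \<Rightarrow> 'a list \<Rightarrow> 'a list list" where
  "blocks [] xs = []"
| "blocks (c # cs) xs = take c xs # blocks cs (drop c xs)"

definition F :: "nat list \<Rightarrow> nat list \<Rightarrow> real \<Rightarrow> complex" where
  "F q r \<sigma> = (if q = [] then 1 else
     (\<Sum>c\<in>comps (length q).
        let qs = blocks c q; rs = blocks c r; h = length c in
        (-1) ^ (h - 1) * (\<Prod>j<h - 1. f (qs ! j) (rs ! j) 0)
          * (f (qs ! (h - 1)) (rs ! (h - 1)) \<sigma> - f (qs ! (h - 1)) (rs ! (h - 1)) 0)))"

end

theory Submission
  imports Defs "HOL-Analysis.FPS_Convergence" "HOL-Analysis.Harmonic_Numbers"
begin

text \<open>All functions involved are boundary values on the unit circle of multiple polylogarithms.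
  Their coefficients tend to \<open>0\<close> with bounded variation, so by Abel summation the power series
  converge, continuously, on the closed unit disc minus \<open>1\<close>. As formal power series,
  \<open>\<theta> = X (1 - X) d/dX\<close> sends the series of a word \<open>w e\<^sub>0\<close> to \<open>1 - X\<close> times that of \<open>w\<close> and the
  series of \<open>w e\<^sub>1\<close> to \<open>X\<close> times it; this makes \<open>L\<close> a shuffle homomorphism, first inside the disc
  and then by continuity on the circle minus \<open>1\<close>. Along the circle \<open>d/d\<sigma> = i z d/dz\<close>, so that
  \<open>d/d\<sigma> L(w e\<^sub>0; e\<^sup>i\<^sup>\<sigma>) = i L(w; e\<^sup>i\<^sup>\<sigma>)\<close>; this is justified by the uniform convergence of the
  derivatives of radial approximations. In \<open>f\<close> the derivative telescopes: with the coefficients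
  \<open>(-1)\<^sup>t M! / (M - t)!\<close>, differentiating \<open>(i\<sigma>)\<^bsup>M-t\<^esup>\<close> in the \<open>t\<close>-th summand cancels the
  derivative of \<open>L(w\<^sub>j e\<^sub>0\<^bsup>t+1\<^esup>)\<close> in the next one; only \<open>i (i\<sigma>)\<^sup>M\<close> times \<open>L\<close> of the
  shuffle of \<open>w\<^sub>j\<close> with \<open>e\<^sub>1\<^sup>r\<close>, that is \<open>i (i\<sigma>)\<^sup>M L(w\<^sub>j) Li\<^sub>1\<^sup>r\<close>, survives. Finally \<open>F\<close> is an alternating
  sum over compositions; regrouping its derivative by whether the last block has length one
  recovers \<open>F\<close> for the shortened indices.\<close>

unbundle no vec_syntax
unbundle fps_syntax

section \<open>Shuffles and formal power series\<close>

lemma shuf_Nil2 [simp]: "shuf u [] = [u]"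
  by (cases u) auto

lemma length_shuf: "w \<in> set (shuf u v) \<Longrightarrow> length w = length u + length v"
  by (induction u v arbitrary: w rule: shuf.induct) auto

lemma mset_shuf_snoc:
  "mset (shuf (u @ [a]) (v @ [b])) =
     image_mset (\<lambda>w. w @ [a]) (mset (shuf u (v @ [b]))) + image_mset (\<lambda>w. w @ [b]) (mset (shuf (u @ [a]) v))"
proof (induction u arbitrary: v)
  case Nil
  show ?case
    by (induction v) (simp_all add: multiset.map_comp comp_def)
next
  case (Cons x u)
  note IH = Cons.IH
  show ?case
  proof (induction v)
    case Nil
    then show ?case using IH[of "[]"] by (simp add: multiset.map_comp comp_def)
  next
    case (Cons y v)
    then show ?case
      using IH[of "y # v"] IH[of v] by (simp add: multiset.map_comp comp_def algebra_simps)
  qed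
qed

lemma sum_list_shuf_snoc:
  fixes g :: "word \<Rightarrow> 'b::comm_monoid_add"
  shows "sum_list (map g (shuf (u @ [a]) (v @ [b]))) =
     sum_list (map (\<lambda>w. g (w @ [a])) (shuf u (v @ [b]))) + sum_list (map (\<lambda>w. g (w @ [b])) (shuf (u @ [a]) v))"
proof -
  have sum_list_eq: "sum_list (map h xs) = sum_mset (image_mset h (mset xs))" for h :: "word \<Rightarrow> 'b" and xs
    by (metis mset_map sum_mset_sum_list)
  show ?thesis
    unfolding sum_list_eq mset_shuf_snoc by (simp add: multiset.map_comp comp_def)
qed

definition in_H1 :: "word \<Rightarrow> bool" where
  "in_H1 w \<longleftrightarrow> w = [] \<or> hd w = E1"

lemma in_H1_shuf: "w \<in> set (shuf u v) \<Longrightarrow> in_H1 u \<Longrightarrow> in_H1 v \<Longrightarrow> in_H1 w"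
  by (induction u v arbitrary: w rule: shuf.induct) (auto simp: in_H1_def)

lemma in_H1_butlast: "in_H1 (u @ [a]) \<Longrightarrow> in_H1 u"
  by (cases u) (auto simp: in_H1_def)

lemma in_H1_snoc: "in_H1 u \<Longrightarrow> u \<noteq> [] \<or> a = E1 \<Longrightarrow> in_H1 (u @ [a])"
  by (cases u) (auto simp: in_H1_def)

lemma in_H1_snoc_E0D: "in_H1 (u @ [E0]) \<Longrightarrow> in_H1 u \<and> u \<noteq> []"
  by (cases u) (auto simp: in_H1_def)

lemma idx_rev_Suc:
  "idx_rev (Suc a) w = (case idx_rev a w of [] \<Rightarrow> [] | k # ks \<Rightarrow> Suc k # ks)"
proof (induction w arbitrary: a)
  case (Cons l w)
  then show ?case by (cases l) auto
qed simp

lemma idx_rev_nonempty: "E1 \<in> set w \<Longrightarrow> idx_rev a w \<noteq> []"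
proof (induction w arbitrary: a)
  case (Cons l w)
  then show ?case by (cases l) auto
qed simp

lemma idx_rev_pos: "k \<in> set (idx_rev a w) \<Longrightarrow> 1 \<le> k"
proof (induction w arbitrary: a)
  case (Cons l w)
  then show ?case by (cases l) auto
qed simp

lemma word_idx_pos: "k \<in> set (word_idx w) \<Longrightarrow> 1 \<le> k"
  by (metis idx_rev_pos set_rev word_idx_def)

lemma word_idx_nonempty: "E1 \<in> set w \<Longrightarrow> word_idx w \<noteq> []"
  by (simp add: word_idx_def idx_rev_nonempty)

lemma word_idx_snoc_E1: "word_idx (w @ [E1]) = word_idx w @ [1]"
  by (simp add: word_idx_def)

lemma word_idx_snoc_E0:
  assumes "E1 \<in> set w"
  shows "word_idx (w @ [E0]) = butlast (word_idx w) @ [Suc (last (word_idx w))]"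
proof -
  obtain k ks where "idx_rev 0 (rev w) = k # ks"
    using idx_rev_nonempty[of "rev w" 0] assms by (cases "idx_rev 0 (rev w)") auto
  then show ?thesis
    by (simp add: word_idx_def idx_rev_Suc[of 0, simplified])
qed

lemma hd_E1_in_set: "w \<noteq> [] \<Longrightarrow> hd w = E1 \<Longrightarrow> E1 \<in> set w"
  by (metis hd_in_set)

fun hsum_real :: "nat list \<Rightarrow> nat \<Rightarrow> real" where
  "hsum_real [] N = 1"
| "hsum_real (k # ks) N = (\<Sum>m\<in>{1..N}. hsum_real ks (m - 1) / real m ^ k)"

lemma hsum_of_real: "hsum ks N = of_real (hsum_real ks N)"
  by (induction ks arbitrary: N) auto

lemma hsum_real_Suc: "hsum_real (k # ks) (Suc N) = hsum_real (k # ks) N + hsum_real ks N / real (Suc N) ^ k"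
  by simp

lemma hsum_real_nonneg: "0 \<le> hsum_real ks N"
  by (induction ks arbitrary: N) (auto intro!: sum_nonneg divide_nonneg_nonneg)

definition Li_coeff :: "nat list \<Rightarrow> nat \<Rightarrow> real" where
  "Li_coeff ks m = hsum_real (tl (rev ks)) m / real (Suc m) ^ last ks"

lemma Li_eq_suminf_Li_coeff:
  "ks \<noteq> [] \<Longrightarrow> Li ks z = (\<Sum>m. of_real (Li_coeff ks m) * z ^ Suc m)"
  unfolding Li_def by (simp add: Li_coeff_def hsum_of_real field_simps)

definition Li_fps :: "nat list \<Rightarrow> complex fps" where
  "Li_fps ks = (if ks = [] then 1 else Abs_fps (\<lambda>n. if n = 0 then 0 else of_real (Li_coeff ks (n - 1))))"

lemma Li_fps_nth: "ks \<noteq> [] \<Longrightarrow> Li_fps ks $ n = (if n = 0 then 0 else of_real (Li_coeff ks (n - 1)))"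
  by (simp add: Li_fps_def)

lemma fps_deriv_Li_fps_nth:
  "fps_deriv (Li_fps (k @ [s])) $ m = of_real (hsum_real (rev k) m / real (Suc m) ^ s * real (Suc m))"
  by (simp add: Li_fps_nth Li_coeff_def del: of_nat_Suc)

lemma fps_X_mult_deriv_Li_fps:
  assumes "1 \<le> s"
  shows "fps_X * fps_deriv (Li_fps (k @ [Suc s])) = Li_fps (k @ [s])"
proof (rule fps_ext)
  fix n
  show "(fps_X * fps_deriv (Li_fps (k @ [Suc s]))) $ n = Li_fps (k @ [s]) $ n"
    by (cases n) (simp_all add: fps_X_mult_nth fps_deriv_Li_fps_nth Li_fps_nth Li_coeff_def del: of_nat_Suc)
qed

lemma one_minus_X_mult_deriv_Li_fps: "(1 - fps_X) * fps_deriv (Li_fps (k @ [1])) = Li_fps k"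
proof (rule fps_ext)
  fix n
  have D: "fps_deriv (Li_fps (k @ [1])) $ m = hsum (rev k) m" for m
    using fps_deriv_Li_fps_nth[of k 1 m] by (simp add: hsum_of_real del: of_nat_Suc)
  have "((1 - fps_X) * fps_deriv (Li_fps (k @ [1]))) $ n
        = fps_deriv (Li_fps (k @ [1])) $ n - (fps_X * fps_deriv (Li_fps (k @ [1]))) $ n"
    by (simp add: algebra_simps)
  also have "\<dots> = hsum (rev k) n - (if n = 0 then 0 else hsum (rev k) (n - 1))"
    by (simp only: fps_X_mult_nth D)
  also have "\<dots> = Li_fps k $ n"
  proof (cases "rev k")
    case Nil
    then show ?thesis by (simp add: Li_fps_def)
  next
    case (Cons x xs)
    then have "k \<noteq> []" "last k = x" "tl (rev k) = xs"
      by (auto simp: last_rev[symmetric])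
    with Cons show ?thesis
      by (cases n) (simp_all add: Li_fps_nth Li_coeff_def hsum_of_real)
  qed
  finally show "((1 - fps_X) * fps_deriv (Li_fps (k @ [1]))) $ n = Li_fps k $ n" .
qed

definition word_fps :: "word \<Rightarrow> complex fps" where
  "word_fps w = (if w = [] then 1 else if hd w = E1 then Li_fps (word_idx w) else 0)"

lemma word_fps_nth_0: "w \<noteq> [] \<Longrightarrow> word_fps w $ 0 = 0"
  using word_idx_nonempty[OF hd_E1_in_set, of w] by (auto simp: word_fps_def Li_fps_nth)

lemma fps_X_mult_deriv_word_fps_snoc_E0:
  assumes "w \<noteq> []" "hd w = E1"
  shows "fps_X * fps_deriv (word_fps (w @ [E0])) = word_fps w"
proof -
  have "word_idx w \<noteq> []" using word_idx_nonempty[OF hd_E1_in_set[OF assms]] .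
  then obtain k s where ks: "word_idx w = k @ [s]" by (metis append_butlast_last_id)
  have "1 \<le> s" using word_idx_pos[of s w] ks by simp
  moreover have "word_idx (w @ [E0]) = k @ [Suc s]"
    using word_idx_snoc_E0[OF hd_E1_in_set[OF assms]] ks by simp
  ultimately show ?thesis using assms ks fps_X_mult_deriv_Li_fps[of s k] by (simp add: word_fps_def)
qed

lemma one_minus_X_mult_deriv_word_fps_snoc_E1:
  assumes "in_H1 w"
  shows "(1 - fps_X) * fps_deriv (word_fps (w @ [E1])) = word_fps w"
proof (cases "w = []")
  case True
  have "word_idx [E1] = [1]" by (simp add: word_idx_def)
  then show ?thesis using True one_minus_X_mult_deriv_Li_fps[of "[]"] by (simp add: word_fps_def Li_fps_def)
next
  case False
  then show ?thesis
    using assms one_minus_X_mult_deriv_Li_fps[of "word_idx w"]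
    by (simp add: in_H1_def word_fps_def word_idx_snoc_E1)
qed

definition theta :: "'a::comm_ring_1 fps \<Rightarrow> 'a fps" where
  "theta p = fps_X * (1 - fps_X) * fps_deriv p"

definition snoc_factor :: "letter \<Rightarrow> complex fps" where
  "snoc_factor a = (case a of E0 \<Rightarrow> 1 - fps_X | E1 \<Rightarrow> fps_X)"

lemma theta_0 [simp]: "theta 0 = 0"
  by (simp add: theta_def)

lemma theta_add: "theta (p + q) = theta p + theta q"
  by (simp add: theta_def algebra_simps)

lemma theta_mult: "theta (p * q) = theta p * q + p * theta q"
  by (simp add: theta_def fps_deriv_mult algebra_simps)

lemma theta_sum_list: "theta (sum_list ps) = sum_list (map theta ps)"
  by (induction ps) (simp_all add: theta_add)

lemma sum_list_word_fps_nth_0: "[] \<notin> set ws \<Longrightarrow> sum_list (map word_fps ws) $ 0 = 0"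
  by (induction ws) (auto simp: word_fps_nth_0)

lemma theta_eqD:
  fixes p q :: "'a::{idom, semiring_char_0} fps"
  assumes "theta p = theta q" "p $ 0 = q $ 0"
  shows "p = q"
proof -
  have "fps_X * (1 - fps_X) \<noteq> (0 :: 'a fps)"
  proof
    assume "fps_X * (1 - fps_X) = (0 :: 'a fps)"
    then have "(fps_X * (1 - fps_X) :: 'a fps) $ 1 = 0" by simp
    then show False by (simp add: fps_X_mult_nth)
  qed
  then have "fps_deriv p = fps_deriv q"
    using assms(1) by (simp add: theta_def mult.assoc)
  then show ?thesis
    using assms(2) fps_deriv_eq_iff[of p q] by simp
qed

lemma theta_word_fps_snoc:
  assumes "in_H1 w" "w \<noteq> [] \<or> a = E1"
  shows "theta (word_fps (w @ [a])) = snoc_factor a * word_fps w"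
proof (cases a)
  case E0
  then have "w \<noteq> []" "hd w = E1" using assms by (auto simp: in_H1_def)
  then show ?thesis
    using fps_X_mult_deriv_word_fps_snoc_E0[of w] E0
    by (simp add: theta_def snoc_factor_def ac_simps)
next
  case E1
  then show ?thesis
    using one_minus_X_mult_deriv_word_fps_snoc_E1[OF assms(1)]
    by (simp add: theta_def snoc_factor_def ac_simps)
qed

lemma theta_sum_word_fps_snoc:
  assumes "\<And>w. w \<in> set ws \<Longrightarrow> in_H1 w \<and> (w \<noteq> [] \<or> a = E1)"
  shows "theta (sum_list (map (\<lambda>w. word_fps (w @ [a])) ws)) = snoc_factor a * sum_list (map word_fps ws)"
proof -
  have "map (\<lambda>w. theta (word_fps (w @ [a]))) ws = map (\<lambda>w. snoc_factor a * word_fps w) ws"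
    using assms theta_word_fps_snoc by auto
  then show ?thesis
    by (simp only: theta_sum_list map_map comp_def sum_list_const_mult)
qed

text \<open>Both sides vanish at \<open>0\<close> and, by induction on the total length, have the same image
  under the derivation \<open>theta\<close>.\<close>
lemma word_fps_shuf:
  assumes "in_H1 u" "in_H1 v"
  shows "sum_list (map word_fps (shuf u v)) = word_fps u * word_fps v"
  using assms
proof (induction "length u + length v" arbitrary: u v rule: less_induct)
  case less
  show ?case
  proof (cases "u = [] \<or> v = []")
    case True
    then show ?thesis by (auto simp: word_fps_def)
  next
    case False
    then obtain u' a v' b where u: "u = u' @ [a]" and v: "v = v' @ [b]"
      by (metis rev_exhaust)
    have H1u': "in_H1 u'" and H1v': "in_H1 v'"
      using less.prems u v in_H1_butlast by auto
    have u'a: "u' \<noteq> [] \<or> a = E1" and v'b: "v' \<noteq> [] \<or> b = E1"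
      using less.prems u v by (auto simp: in_H1_def hd_append split: if_splits)
    have shuf_u'v: "in_H1 w \<and> (w \<noteq> [] \<or> a = E1)" if "w \<in> set (shuf u' v)" for w
      using in_H1_shuf[OF that H1u' less.prems(2)] length_shuf[OF that] v by auto
    have shuf_uv': "in_H1 w \<and> (w \<noteq> [] \<or> b = E1)" if "w \<in> set (shuf u v')" for w
      using in_H1_shuf[OF that less.prems(1) H1v'] length_shuf[OF that] u by auto
    have IH1: "sum_list (map word_fps (shuf u' v)) = word_fps u' * word_fps v"
      using less.hyps[of u' v] H1u' less.prems u by simp
    have IH2: "sum_list (map word_fps (shuf u v')) = word_fps u * word_fps v'"
      using less.hyps[of u v'] H1v' less.prems v by simp
    show ?thesis
    proof (rule theta_eqD)
      show "theta (sum_list (map word_fps (shuf u v))) = theta (word_fps u * word_fps v)"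
        unfolding u v sum_list_shuf_snoc theta_add theta_mult
        using theta_sum_word_fps_snoc[OF shuf_u'v] theta_sum_word_fps_snoc[OF shuf_uv']
          theta_word_fps_snoc[OF H1u' u'a] theta_word_fps_snoc[OF H1v' v'b] IH1 IH2 u v
        by (simp add: algebra_simps)
      have "[] \<notin> set (shuf u v)"
        using length_shuf[of "[]" u v] u by auto
      then show "sum_list (map word_fps (shuf u v)) $ 0 = (word_fps u * word_fps v) $ 0"
        using word_fps_nth_0[of u] u sum_list_word_fps_nth_0 by simp
    qed
  qed
qed

definition poly_fps :: "hpoly \<Rightarrow> complex fps" where
  "poly_fps P = sum_list (map (\<lambda>(c, u). fps_const (of_rat c) * word_fps u) P)"

definition poly_in_H1 :: "hpoly \<Rightarrow> bool" where
  "poly_in_H1 P \<longleftrightarrow> (\<forall>(c, u)\<in>set P. in_H1 u)"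

lemma poly_fps_Nil [simp]: "poly_fps [] = 0"
  by (simp add: poly_fps_def)

lemma poly_fps_Cons [simp]: "poly_fps ((c, u) # P) = fps_const (of_rat c) * word_fps u + poly_fps P"
  by (simp add: poly_fps_def)

lemma poly_fps_append [simp]: "poly_fps (P @ Q) = poly_fps P + poly_fps Q"
  by (simp add: poly_fps_def)

lemma poly_fps_map_const: "poly_fps (map (\<lambda>w. (c, w)) ws) = fps_const (of_rat c) * sum_list (map word_fps ws)"
  by (induction ws) (auto simp: algebra_simps)

lemma poly_in_H1_Nil [simp]: "poly_in_H1 []"
  by (simp add: poly_in_H1_def)

lemma poly_in_H1_Cons [simp]: "poly_in_H1 ((c, u) # P) \<longleftrightarrow> in_H1 u \<and> poly_in_H1 P"
  by (simp add: poly_in_H1_def)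

lemma shuffle_Nil1 [simp]: "shuffle [] Q = []"
  by (simp add: shuffle_def)

lemma shuffle_Cons1:
  "shuffle ((c, u) # P) Q = concat (map (\<lambda>(d, v). map (\<lambda>w. (c * d, w)) (shuf u v)) Q) @ shuffle P Q"
  by (simp add: shuffle_def)

lemma shuffle_memD:
  "(e, w) \<in> set (shuffle P Q) \<Longrightarrow> \<exists>c u d v. (c, u) \<in> set P \<and> (d, v) \<in> set Q \<and> w \<in> set (shuf u v)"
  by (auto simp: shuffle_def)

lemma poly_in_H1_shuffle: "poly_in_H1 P \<Longrightarrow> poly_in_H1 Q \<Longrightarrow> poly_in_H1 (shuffle P Q)"
  unfolding poly_in_H1_def by (fastforce dest: shuffle_memD intro: in_H1_shuf)

lemma poly_in_H1_e1pow: "poly_in_H1 (e1pow r)"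
proof (induction r)
  case (Suc r)
  have "poly_in_H1 [(1, [E1])]" by (simp add: in_H1_def)
  then show ?case using poly_in_H1_shuffle[OF Suc] by simp
qed (simp add: in_H1_def)

lemma poly_fps_shuffle:
  assumes "poly_in_H1 P" "poly_in_H1 Q"
  shows "poly_fps (shuffle P Q) = poly_fps P * poly_fps Q"
  using assms(1)
proof (induction P)
  case (Cons p P)
  obtain c u where p: "p = (c, u)" by (cases p)
  have "in_H1 u" "poly_in_H1 P" using Cons.prems p by auto
  have "poly_fps (concat (map (\<lambda>(d, v). map (\<lambda>w. (c * d, w)) (shuf u v)) Q))
        = fps_const (of_rat c) * word_fps u * poly_fps Q"
    using assms(2)
  proof (induction Q)
    case (Cons q Q)
    obtain d v where q: "q = (d, v)" by (cases q)
    have "in_H1 v" "poly_in_H1 Q" using Cons.prems q by auto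
    have "poly_fps (map (\<lambda>w. (c * d, w)) (shuf u v))
          = fps_const (of_rat c) * fps_const (of_rat d) * (word_fps u * word_fps v)"
      by (simp add: poly_fps_map_const word_fps_shuf[OF \<open>in_H1 u\<close> \<open>in_H1 v\<close>] of_rat_mult)
    then show ?case
      using Cons.IH[OF \<open>poly_in_H1 Q\<close>] q by (simp add: distrib_left ac_simps)
  qed simp
  then show ?case using Cons.IH[OF \<open>poly_in_H1 P\<close>] p by (simp add: shuffle_Cons1 algebra_simps)
qed simp

section \<open>Growth of the coefficients\<close>

lemma hsum_real_mono_Suc: "hsum_real ks N \<le> hsum_real ks (Suc N)"
  by (cases ks) (auto simp del: hsum_real.simps(2) simp: hsum_real_Suc hsum_real_nonneg)

lemma power_Suc_add_ge:
  fixes x y :: real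
  assumes "0 \<le> x" "0 \<le> y"
  shows "x ^ Suc d + x ^ d * y \<le> (x + y) ^ Suc d"
proof -
  have "x ^ d * (x + y) \<le> (x + y) ^ d * (x + y)"
    using assms by (intro mult_right_mono power_mono) auto
  then show ?thesis by (simp add: algebra_simps)
qed

lemma hsum_real_le_harm_power:
  assumes "\<forall>k\<in>set ks. 1 \<le> k"
  shows "hsum_real ks N \<le> harm N ^ length ks"
  using assms
proof (induction ks arbitrary: N)
  case (Cons k ks)
  have "1 \<le> k" using Cons.prems by simp
  have IH: "hsum_real ks N \<le> harm N ^ length ks" for N using Cons by simp
  show ?case
  proof (induction N)
    case (Suc N)
    have "hsum_real ks N / real (Suc N) ^ k \<le> hsum_real ks N / real (Suc N)"
      using \<open>1 \<le> k\<close> hsum_real_nonneg[of ks N]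
      by (intro divide_left_mono) (auto simp del: of_nat_Suc intro!: self_le_power mult_pos_pos)
    also have "\<dots> \<le> harm N ^ length ks * inverse (real (Suc N))"
      using IH[of N] by (simp add: divide_inverse mult_right_mono)
    finally have "hsum_real (k # ks) (Suc N) \<le> harm N ^ Suc (length ks) + harm N ^ length ks * inverse (real (Suc N))"
      using Suc.IH unfolding hsum_real_Suc by simp
    also have "\<dots> \<le> (harm N + inverse (real (Suc N))) ^ Suc (length ks)"
      by (rule power_Suc_add_ge) (auto intro: harm_nonneg)
    finally show ?case by (simp add: harm_Suc)
  qed (simp add: harm_def)
qed simp

lemma harm_le_one_plus_ln: "harm N \<le> 1 + ln (real N + 1)"
proof (cases "N = 0")
  case False
  have "harm N - ln (real N) \<le> harm 1 - ln (real 1 :: real)"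
    using euler_mascheroni_sequence_decreasing[of 1 N] False by simp
  then have "harm N \<le> 1 + ln (real N)" by (simp add: harm_def)
  also have "ln (real N) \<le> ln (real N + 1)" using False by simp
  finally show ?thesis by simp
qed (simp add: harm_def)

lemma one_plus_ln_power_le:
  fixes x :: real
  assumes "1 \<le> x"
  shows "(1 + ln x) ^ d \<le> (1 + 2 * real d) ^ d * x powr (1/2)"
proof (cases "d = 0")
  case False
  define y where "y = x powr (1 / (2 * real d))"
  have "1 \<le> y" unfolding y_def using assms False by (simp add: ge_one_powr_ge_zero)
  have "ln x = 2 * real d * ln y" unfolding y_def using assms False by (simp add: ln_powr)
  also have "\<dots> \<le> 2 * real d * y" using \<open>1 \<le> y\<close> by (intro mult_left_mono ln_bound) auto
  finally have "1 + ln x \<le> (1 + 2 * real d) * y" using \<open>1 \<le> y\<close> by (simp add: algebra_simps)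
  then have "(1 + ln x) ^ d \<le> ((1 + 2 * real d) * y) ^ d"
    using assms by (intro power_mono) auto
  also have "\<dots> = (1 + 2 * real d) ^ d * x powr (1/2)"
    unfolding y_def power_mult_distrib using assms False by (simp add: powr_realpow[symmetric] powr_powr)
  finally show ?thesis .
qed (use assms in \<open>simp add: ge_one_powr_ge_zero\<close>)

definition hsum_const :: "nat \<Rightarrow> real" where
  "hsum_const d = (1 + 2 * real d) ^ d"

lemma hsum_const_nonneg: "0 \<le> hsum_const d"
  by (simp add: hsum_const_def)

lemma hsum_const_mono: "d \<le> d' \<Longrightarrow> hsum_const d \<le> hsum_const d'"
  unfolding hsum_const_def
  by (rule order.trans[OF power_mono power_increasing]) auto

lemma hsum_real_le_sqrt:
  assumes "\<forall>k\<in>set ks. 1 \<le> k"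
  shows "hsum_real ks N \<le> hsum_const (length ks) * (real N + 1) powr (1/2)"
proof -
  have "hsum_real ks N \<le> harm N ^ length ks" by (rule hsum_real_le_harm_power[OF assms])
  also have "\<dots> \<le> (1 + ln (real N + 1)) ^ length ks"
    by (intro power_mono harm_le_one_plus_ln harm_nonneg)
  also have "\<dots> \<le> hsum_const (length ks) * (real N + 1) powr (1/2)"
    unfolding hsum_const_def by (rule one_plus_ln_power_le) simp
  finally show ?thesis .
qed

lemma powr_half_divide:
  fixes X :: real
  assumes "0 < X"
  shows "X powr (1/2) / X = X powr (-1/2)" and "X powr (1/2) / X ^ 2 = X powr (-3/2)"
proof -
  show "X powr (1/2) / X = X powr (-1/2)"
    using powr_diff[of X "1/2" 1] assms by simp
  have "X powr (1/2) / X ^ 2 = X powr (1/2) / X powr 2"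
    using assms by (simp add: powr_realpow)
  also have "\<dots> = X powr (-3/2)"
    by (simp add: powr_diff[symmetric])
  finally show "X powr (1/2) / X ^ 2 = X powr (-3/2)" .
qed

lemma Suc_le_power: "1 \<le> s \<Longrightarrow> real m + 1 \<le> real (Suc m) ^ s"
  using self_le_power[of "real m + 1" s] by (simp add: add.commute)

lemma hsum_real_diff_le:
  assumes "\<forall>k\<in>set ks. 1 \<le> k"
  shows "hsum_real ks (Suc m) - hsum_real ks m \<le> hsum_const (length ks) * (real m + 1) powr (-1/2)"
proof (cases ks)
  case Nil
  then show ?thesis by (simp add: hsum_const_def)
next
  case (Cons k ks')
  have "1 \<le> k" and pos: "\<forall>k\<in>set ks'. 1 \<le> k" using assms Cons by auto
  have "hsum_real ks (Suc m) - hsum_real ks m = hsum_real ks' m / real (Suc m) ^ k"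
    unfolding Cons by simp
  also have "\<dots> \<le> hsum_real ks' m / (real m + 1)"
    using \<open>1 \<le> k\<close> hsum_real_nonneg[of ks' m] Suc_le_power[OF \<open>1 \<le> k\<close>, of m]
    by (intro divide_left_mono) auto
  also have "\<dots> \<le> hsum_const (length ks') * (real m + 1) powr (1/2) / (real m + 1)"
    by (intro divide_right_mono hsum_real_le_sqrt pos) auto
  also have "\<dots> \<le> hsum_const (length ks) * (real m + 1) powr (1/2) / (real m + 1)"
    using hsum_const_mono[of "length ks'" "length ks"] Cons
    by (intro divide_right_mono mult_right_mono) auto
  also have "\<dots> = hsum_const (length ks) * ((real m + 1) powr (1/2) / (real m + 1))"
    by simp
  also have "\<dots> = hsum_const (length ks) * (real m + 1) powr (-1/2)"
    using powr_half_divide(1)[of "real m + 1"] by simp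
  finally show ?thesis .
qed

lemma power_diff_le:
  fixes x y :: real
  assumes "0 \<le> y" "y \<le> x" "x \<le> 1"
  shows "x ^ s - y ^ s \<le> real s * (x - y)"
proof (induction s)
  case (Suc s)
  have "x ^ Suc s - y ^ Suc s = x * (x ^ s - y ^ s) + y ^ s * (x - y)"
    by (simp add: algebra_simps)
  also have "\<dots> \<le> 1 * (real s * (x - y)) + 1 * (x - y)"
  proof (intro add_mono mult_mono)
    show "y ^ s \<le> 1" using assms by (intro power_le_one) auto
    show "0 \<le> x ^ s - y ^ s" using assms by (simp add: power_mono)
  qed (use assms Suc.IH in auto)
  finally show ?case by (simp add: algebra_simps)
qed simp

lemma inverse_power_diff_le:
  fixes X :: real
  assumes "1 \<le> X"
  shows "1 / X ^ s - 1 / (X + 1) ^ s \<le> real s / X ^ 2"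
proof -
  have "1 / X - 1 / (X + 1) = 1 / (X * (X + 1))"
    using assms by (simp add: field_simps)
  also have "\<dots> \<le> 1 / X ^ 2"
    using assms by (intro divide_left_mono) (auto simp: power2_eq_square)
  finally have "real s * (1 / X - 1 / (X + 1)) \<le> real s / X ^ 2"
    using mult_left_mono[of _ _ "real s"] by fastforce
  moreover have "(1 / X) ^ s - (1 / (X + 1)) ^ s \<le> real s * (1 / X - 1 / (X + 1))"
  proof (rule power_diff_le)
    show "1 / (X + 1) \<le> 1 / X"
      using assms by (intro divide_left_mono) auto
  qed (use assms in auto)
  ultimately show ?thesis
    by (simp add: power_one_over)
qed

locale pos_index =
  fixes ks :: "nat list"
  assumes nonempty: "ks \<noteq> []" and pos: "\<forall>k\<in>set ks. 1 \<le> k"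
begin

definition inner_idx :: "nat list" where "inner_idx = tl (rev ks)"
definition top_exp :: nat where "top_exp = last ks"

lemma one_le_top_exp: "1 \<le> top_exp"
  using pos nonempty unfolding top_exp_def by simp

lemma inner_idx_pos: "\<forall>k\<in>set inner_idx. 1 \<le> k"
  using pos unfolding inner_idx_def by (metis list.set_sel(2) rev.simps(1) set_rev tl_Nil)

lemma Li_coeff_eq: "Li_coeff ks m = hsum_real inner_idx m / real (Suc m) ^ top_exp"
  by (simp add: Li_coeff_def inner_idx_def top_exp_def)

lemma Li_coeff_nonneg: "0 \<le> Li_coeff ks m"
  by (simp add: Li_coeff_eq hsum_real_nonneg)

lemma Li_coeff_le: "Li_coeff ks m \<le> hsum_const (length inner_idx) * (real m + 1) powr (-1/2)"
proof -
  have "Li_coeff ks m \<le> hsum_real inner_idx m / (real m + 1)"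
    unfolding Li_coeff_eq using hsum_real_nonneg[of inner_idx m] Suc_le_power[OF one_le_top_exp, of m]
    by (intro divide_left_mono) auto
  also have "\<dots> \<le> hsum_const (length inner_idx) * (real m + 1) powr (1/2) / (real m + 1)"
    by (intro divide_right_mono hsum_real_le_sqrt inner_idx_pos) auto
  also have "\<dots> = hsum_const (length inner_idx) * ((real m + 1) powr (1/2) / (real m + 1))"
    by simp
  also have "\<dots> = hsum_const (length inner_idx) * (real m + 1) powr (-1/2)"
    using powr_half_divide(1)[of "real m + 1"] by simp
  finally show ?thesis .
qed

lemma Li_coeff_tendsto_0: "Li_coeff ks \<longlonglongrightarrow> 0"
proof (rule tendsto_sandwich[of "\<lambda>_. 0" _ _ "\<lambda>m. hsum_const (length inner_idx) * (real m + 1) powr (-1/2)"])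
  have "filterlim (\<lambda>m. real m + 1) at_top sequentially"
    by (rule filterlim_at_top_mono[OF filterlim_real_sequentially]) auto
  then have "(\<lambda>m. (real m + 1) powr (-1/2)) \<longlonglongrightarrow> 0"
    by (intro tendsto_neg_powr) simp_all
  then show "(\<lambda>m. hsum_const (length inner_idx) * (real m + 1) powr (-1/2)) \<longlonglongrightarrow> 0"
    by (rule tendsto_mult_right_zero)
qed (intro always_eventually allI Li_coeff_nonneg Li_coeff_le tendsto_const)+

text \<open>Writing the coefficient as \<open>H m / (m + 1)\<^sup>s\<close>, its increment splits into the increment of the
  slowly growing \<open>H\<close> and that of \<open>1 / (m + 1)\<^sup>s\<close>; both are \<open>O((m + 1) powr (-3/2))\<close>.\<close>
lemma Li_coeff_diff_le:
  "\<bar>Li_coeff ks (Suc m) - Li_coeff ks m\<bar>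
     \<le> hsum_const (length inner_idx) * (1 + real top_exp) * (real m + 1) powr (-3/2)"
proof -
  define H where "H = hsum_real inner_idx"
  define X where "X = real m + 1"
  define c where "c = hsum_const (length inner_idx)"
  have "1 \<le> X" by (simp add: X_def)
  have "0 \<le> c" by (simp add: c_def hsum_const_nonneg)
  have dH: "0 \<le> H (Suc m) - H m" "H (Suc m) - H m \<le> c * X powr (-1/2)"
    using hsum_real_mono_Suc[of inner_idx m] hsum_real_diff_le[OF inner_idx_pos, of m]
    unfolding H_def c_def X_def by simp_all
  have dP: "0 \<le> 1 / X ^ top_exp - 1 / (X + 1) ^ top_exp"
    using \<open>1 \<le> X\<close> by (auto intro!: divide_left_mono power_mono)
  have "(H (Suc m) - H m) / (X + 1) ^ top_exp \<le> (H (Suc m) - H m) / X"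
    using dH(1) \<open>1 \<le> X\<close> one_le_top_exp
    by (intro divide_left_mono) (auto intro!: order.trans[OF _ self_le_power] mult_pos_pos)
  also have "\<dots> \<le> c * X powr (-1/2) / X"
    using dH(2) \<open>1 \<le> X\<close> by (intro divide_right_mono) auto
  also have "\<dots> = c * X powr (-3/2)"
    using powr_diff[of X "-1/2" 1] \<open>1 \<le> X\<close> by simp
  finally have increment: "(H (Suc m) - H m) / (X + 1) ^ top_exp \<le> c * X powr (-3/2)" .
  have "H m * (1 / X ^ top_exp - 1 / (X + 1) ^ top_exp) \<le> c * X powr (1/2) * (real top_exp / X ^ 2)"
    using dP \<open>0 \<le> c\<close> hsum_real_le_sqrt[OF inner_idx_pos, of m] inverse_power_diff_le[OF \<open>1 \<le> X\<close>]
    unfolding H_def c_def X_def by (intro mult_mono) auto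
  also have "\<dots> = c * real top_exp * (X powr (1/2) / X ^ 2)"
    by simp
  also have "\<dots> = c * real top_exp * X powr (-3/2)"
    using powr_half_divide(2)[of X] \<open>1 \<le> X\<close> by simp
  finally have denominators: "H m * (1 / X ^ top_exp - 1 / (X + 1) ^ top_exp) \<le> c * real top_exp * X powr (-3/2)" .
  have "Li_coeff ks (Suc m) = H (Suc m) / (X + 1) ^ top_exp" "Li_coeff ks m = H m / X ^ top_exp"
    unfolding Li_coeff_eq H_def X_def by (simp_all add: add.commute)
  then have "Li_coeff ks (Suc m) - Li_coeff ks m
        = (H (Suc m) - H m) / (X + 1) ^ top_exp - H m * (1 / X ^ top_exp - 1 / (X + 1) ^ top_exp)"
    by (simp add: diff_divide_distrib right_diff_distrib)
  moreover have "0 \<le> (H (Suc m) - H m) / (X + 1) ^ top_exp"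
    using dH(1) \<open>1 \<le> X\<close> by simp
  moreover have "0 \<le> H m * (1 / X ^ top_exp - 1 / (X + 1) ^ top_exp)"
    using dP hsum_real_nonneg[of inner_idx m] unfolding H_def by simp
  moreover have "c * (1 + real top_exp) * X powr (-3/2) = c * X powr (-3/2) + c * real top_exp * X powr (-3/2)"
    by (simp only: distrib_left distrib_right mult_1_right)
  ultimately have "\<bar>Li_coeff ks (Suc m) - Li_coeff ks m\<bar> \<le> c * (1 + real top_exp) * X powr (-3/2)"
    using increment denominators by linarith
  then show ?thesis unfolding c_def X_def .
qed

lemma summable_Li_coeff_diff: "summable (\<lambda>m. \<bar>Li_coeff ks (Suc m) - Li_coeff ks m\<bar>)"
proof -
  have "summable (\<lambda>n. real n powr (-3/2))" by (simp add: summable_real_powr_iff)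
  then have "summable (\<lambda>n. real (Suc n) powr (-3/2))" by (subst summable_Suc_iff)
  then have "summable (\<lambda>m. hsum_const (length inner_idx) * (1 + real top_exp) * (real m + 1) powr (-3/2))"
    by (intro summable_mult) (simp add: add.commute)
  then show ?thesis
    by (rule summable_comparison_test'[where N = 0]) (use Li_coeff_diff_le in simp)
qed

end

section \<open>Boundary values on the unit circle\<close>

lemma norm_of_real_mult_power_le: "norm (z :: complex) \<le> 1 \<Longrightarrow> norm (of_real c * z ^ k) \<le> \<bar>c\<bar>"
  by (simp add: norm_mult norm_power mult_left_le power_le_one)

text \<open>Abel summation: multiplied by \<open>1 - z\<close>, the series with coefficients \<open>a\<close> becomes the series
  of the differences of \<open>a\<close>, which converges absolutely and uniformly on the closed unit disc.\<close>
locale null_bv_seq =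
  fixes a :: "nat \<Rightarrow> real"
  assumes tendsto_0: "a \<longlonglongrightarrow> 0" and bounded_variation: "summable (\<lambda>m. \<bar>a (Suc m) - a m\<bar>)"
begin

definition diff_seq :: "nat \<Rightarrow> real" where
  "diff_seq m = (if m = 0 then a 0 else a m - a (m - 1))"

definition abel_series :: "complex \<Rightarrow> complex" where
  "abel_series z = (\<Sum>m. of_real (diff_seq m) * z ^ Suc m)"

lemma summable_abs_diff_seq: "summable (\<lambda>m. \<bar>diff_seq m\<bar>)"
  using bounded_variation by (subst summable_Suc_iff[symmetric]) (simp add: diff_seq_def)

lemma one_minus_mult_partial_sum:
  fixes z :: complex
  shows "(1 - z) * (\<Sum>m<Suc N. of_real (a m) * z ^ Suc m)
     = (\<Sum>m<Suc N. of_real (diff_seq m) * z ^ Suc m) - of_real (a N) * z ^ (N + 2)"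
proof (induction N)
  case (Suc N)
  have "(1 - z) * (\<Sum>m<Suc (Suc N). of_real (a m) * z ^ Suc m)
      = (1 - z) * (\<Sum>m<Suc N. of_real (a m) * z ^ Suc m) + (1 - z) * (of_real (a (Suc N)) * z ^ (N + 2))"
    by (simp add: algebra_simps)
  also have "\<dots> = (\<Sum>m<Suc (Suc N). of_real (diff_seq m) * z ^ Suc m) - of_real (a (Suc N)) * z ^ (Suc N + 2)"
    unfolding Suc.IH by (simp add: diff_seq_def algebra_simps)
  finally show ?case .
qed (simp add: diff_seq_def algebra_simps power2_eq_square)

lemma summable_abel_series_terms: "norm (z :: complex) \<le> 1 \<Longrightarrow> summable (\<lambda>m. of_real (diff_seq m) * z ^ Suc m)"
  by (rule summable_comparison_test'[OF summable_abs_diff_seq, where N = 0])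
     (simp add: norm_of_real_mult_power_le del: power_Suc)

lemma sums_abel_series:
  fixes z :: complex
  assumes "norm z \<le> 1" "z \<noteq> 1"
  shows "(\<lambda>m. of_real (a m) * z ^ Suc m) sums (abel_series z / (1 - z))"
proof -
  have "1 - z \<noteq> 0" using assms by simp
  have D: "(\<lambda>N. \<Sum>m<Suc N. of_real (diff_seq m) * z ^ Suc m) \<longlonglongrightarrow> abel_series z"
    unfolding abel_series_def using summable_LIMSEQ[OF summable_abel_series_terms[OF assms(1)]]
    by (rule LIMSEQ_Suc)
  have A: "(\<lambda>N. of_real (a N) * z ^ (N + 2)) \<longlonglongrightarrow> 0"
  proof (rule tendsto_norm_zero_cancel, rule tendsto_sandwich[of "\<lambda>_. 0" _ _ "\<lambda>N. \<bar>a N\<bar>"])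
    show "\<forall>\<^sub>F n in sequentially. norm (of_real (a n) * z ^ (n + 2)) \<le> \<bar>a n\<bar>"
      using assms(1) by (simp add: norm_of_real_mult_power_le del: power_Suc)
  qed (auto intro: tendsto_rabs_zero[OF tendsto_0])
  have "(\<lambda>N. ((\<Sum>m<Suc N. of_real (diff_seq m) * z ^ Suc m) - of_real (a N) * z ^ (N + 2)) / (1 - z))
          \<longlonglongrightarrow> (abel_series z - 0) / (1 - z)"
    by (intro tendsto_intros D A \<open>1 - z \<noteq> 0\<close>)
  moreover have "(\<Sum>m<Suc N. of_real (a m) * z ^ Suc m) =
     ((\<Sum>m<Suc N. of_real (diff_seq m) * z ^ Suc m) - of_real (a N) * z ^ (N + 2)) / (1 - z)" for N
    using one_minus_mult_partial_sum[of z N] \<open>1 - z \<noteq> 0\<close> by (metis nonzero_mult_div_cancel_left)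
  ultimately have "(\<lambda>N. \<Sum>m<Suc N. of_real (a m) * z ^ Suc m) \<longlonglongrightarrow> abel_series z / (1 - z)"
    by simp
  then show ?thesis unfolding sums_def by (rule LIMSEQ_imp_Suc)
qed

lemma continuous_on_abel_series: "continuous_on (cball 0 1) abel_series"
proof -
  have "uniform_limit (cball 0 1) (\<lambda>n (z :: complex). \<Sum>i<n. of_real (diff_seq i) * z ^ Suc i)
          (\<lambda>z. \<Sum>i. of_real (diff_seq i) * z ^ Suc i) sequentially"
    by (rule Weierstrass_m_test[OF _ summable_abs_diff_seq])
       (simp add: norm_of_real_mult_power_le del: power_Suc)
  then have "continuous_on (cball 0 1) (\<lambda>z :: complex. \<Sum>i. of_real (diff_seq i) * z ^ Suc i)"
    by (rule uniform_limit_theorem[rotated]) (auto intro!: always_eventually continuous_intros)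
  then show ?thesis
    unfolding abel_series_def[abs_def] .
qed

end

definition cdisc_minus_one :: "complex set" where
  "cdisc_minus_one = cball 0 1 - {1}"

lemma mem_cdisc_minus_one: "z \<in> cdisc_minus_one \<longleftrightarrow> norm z \<le> 1 \<and> z \<noteq> 1"
  by (auto simp: cdisc_minus_one_def)

lemma exp_circle_in_cdisc_minus_one:
  assumes "0 < \<sigma>" "\<sigma> < 2 * pi"
  shows "exp (\<i> * of_real \<sigma>) \<in> cdisc_minus_one"
proof -
  have "exp (\<i> * of_real \<sigma>) \<noteq> 1"
  proof
    assume "exp (\<i> * of_real \<sigma>) = 1"
    then obtain n :: int where n: "\<sigma> = of_int (2 * n) * pi" by (auto simp: exp_eq_1)
    then have "0 < of_int n * (2 * pi)" "of_int n * (2 * pi) < 1 * (2 * pi)"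
      using assms by (simp_all add: algebra_simps)
    then have "0 < n" "n < 1"
      using pi_gt_zero by (simp_all add: zero_less_mult_iff mult_less_cancel_right)
    then show False by simp
  qed
  then show ?thesis by (simp add: mem_cdisc_minus_one norm_exp_eq_Re)
qed

context pos_index
begin

lemma null_bv_seq_Li_coeff: "null_bv_seq (Li_coeff ks)"
  by unfold_locales (rule Li_coeff_tendsto_0, rule summable_Li_coeff_diff)

lemma Li_sums: "z \<in> cdisc_minus_one \<Longrightarrow> (\<lambda>m. of_real (Li_coeff ks m) * z ^ Suc m) sums Li ks z"
  using null_bv_seq.sums_abel_series[OF null_bv_seq_Li_coeff, of z]
  unfolding mem_cdisc_minus_one Li_eq_suminf_Li_coeff[OF nonempty] by (metis sums_unique)

lemma continuous_on_Li: "continuous_on cdisc_minus_one (Li ks)"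
proof -
  have "Li ks z = null_bv_seq.abel_series (Li_coeff ks) z / (1 - z)" if "z \<in> cdisc_minus_one" for z
    using null_bv_seq.sums_abel_series[OF null_bv_seq_Li_coeff] Li_sums[OF that] that
    unfolding mem_cdisc_minus_one by (metis sums_unique2)
  moreover have "continuous_on cdisc_minus_one (\<lambda>z. null_bv_seq.abel_series (Li_coeff ks) z / (1 - z))"
    by (intro continuous_intros continuous_on_subset[OF null_bv_seq.continuous_on_abel_series[OF null_bv_seq_Li_coeff]])
       (auto simp: cdisc_minus_one_def)
  ultimately show ?thesis by (metis (mono_tags, lifting) continuous_on_cong)
qed

lemma Li_fps_sums: "z \<in> cdisc_minus_one \<Longrightarrow> (\<lambda>n. Li_fps ks $ n * z ^ n) sums Li ks z"
proof -
  assume "z \<in> cdisc_minus_one"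
  then have "(\<lambda>n. Li_fps ks $ Suc n * z ^ Suc n) sums Li ks z"
    using Li_sums by (simp add: Li_fps_nth nonempty)
  then show ?thesis by (subst (asm) sums_Suc_iff) (simp add: Li_fps_nth nonempty)
qed

lemma eval_Li_fps: "z \<in> cdisc_minus_one \<Longrightarrow> eval_fps (Li_fps ks) z = Li ks z"
  unfolding eval_fps_def using Li_fps_sums by (metis sums_unique)

lemma fps_conv_radius_Li_fps: "1 \<le> fps_conv_radius (Li_fps ks)"
proof -
  have "summable (\<lambda>n. Li_fps ks $ n * (-1) ^ n)"
    using Li_fps_sums[of "-1"] sums_summable by (force simp: mem_cdisc_minus_one)
  then have "norm (-1 :: complex) \<le> fps_conv_radius (Li_fps ks)"
    unfolding fps_conv_radius_def by (rule conv_radius_geI)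
  then show ?thesis by (simp add: one_ereal_def)
qed

end

lemma pos_index_word_idx: "w \<noteq> [] \<Longrightarrow> hd w = E1 \<Longrightarrow> pos_index (word_idx w)"
  using word_idx_nonempty[OF hd_E1_in_set, of w] word_idx_pos[of _ w] by unfold_locales auto

lemma eval_word_fps: "in_H1 w \<Longrightarrow> z \<in> cdisc_minus_one \<Longrightarrow> eval_fps (word_fps w) z = Lword w z"
  using pos_index.eval_Li_fps[OF pos_index_word_idx] by (auto simp: in_H1_def word_fps_def Lword_def)

lemma continuous_on_Lword: "in_H1 w \<Longrightarrow> continuous_on cdisc_minus_one (Lword w)"
  using pos_index.continuous_on_Li[OF pos_index_word_idx, of w]
  by (cases "w = []") (auto simp: in_H1_def Lword_def)

lemma fps_conv_radius_word_fps: "in_H1 w \<Longrightarrow> 1 \<le> fps_conv_radius (word_fps w)"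
  using pos_index.fps_conv_radius_Li_fps[OF pos_index_word_idx] by (auto simp: in_H1_def word_fps_def)

lemma has_vector_derivative_uniform_limit:
  fixes f :: "nat \<Rightarrow> real \<Rightarrow> 'b::banach"
  assumes "open S" "convex S" "x \<in> S"
    and der: "\<And>n t. t \<in> S \<Longrightarrow> (f n has_vector_derivative f' n t) (at t)"
    and unif: "uniform_limit S f' g' sequentially"
    and lim: "\<And>t. t \<in> S \<Longrightarrow> (\<lambda>n. f n t) \<longlonglongrightarrow> g t"
  shows "(g has_vector_derivative g' x) (at x)"
proof -
  have "\<forall>\<^sub>F n in sequentially. \<forall>t\<in>S. \<forall>h. norm (h *\<^sub>R f' n t - h *\<^sub>R g' t) \<le> e * norm h"
    if "e > 0" for e
    using uniform_limitD[OF unif that]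
  proof eventually_elim
    case (elim n)
    show ?case
    proof (intro ballI allI)
      fix t h assume "t \<in> S"
      then have "\<bar>h\<bar> * norm (f' n t - g' t) \<le> \<bar>h\<bar> * e"
        using elim by (intro mult_left_mono) (auto simp: dist_norm)
      then show "norm (h *\<^sub>R f' n t - h *\<^sub>R g' t) \<le> e * norm h"
        by (simp add: scaleR_diff_right[symmetric] mult.commute)
    qed
  qed
  moreover have "(f n has_derivative (\<lambda>h. h *\<^sub>R f' n t)) (at t within S)" if "t \<in> S" for n t
    using der[OF that] by (simp add: has_vector_derivative_def has_derivative_at_withinI)
  ultimately obtain g0 where
    g0: "\<forall>t\<in>S. (\<lambda>n. f n t) \<longlonglongrightarrow> g0 t \<and> (g0 has_derivative (\<lambda>h. h *\<^sub>R g' t)) (at t within S)"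
    using has_derivative_sequence[OF \<open>convex S\<close>, of f "\<lambda>n t h. h *\<^sub>R f' n t" "\<lambda>t h. h *\<^sub>R g' t"]
      \<open>x \<in> S\<close> lim[OF \<open>x \<in> S\<close>] by blast
  have "g0 t = g t" if "t \<in> S" for t
    using g0 that lim[OF that] LIMSEQ_unique by blast
  moreover have "(g0 has_derivative (\<lambda>h. h *\<^sub>R g' x)) (at x)"
    using g0 \<open>x \<in> S\<close> at_within_open[OF _ \<open>open S\<close>] by metis
  ultimately have "(g has_derivative (\<lambda>h. h *\<^sub>R g' x)) (at x)"
    using has_derivative_transform_within_open[OF _ \<open>open S\<close> \<open>x \<in> S\<close>] by blast
  then show ?thesis
    by (simp add: has_vector_derivative_def)
qed

lemma uniform_limit_radial:
  fixes Phi :: "complex \<Rightarrow> complex" and u :: "real \<Rightarrow> complex"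
  assumes "uniformly_continuous_on K Phi" "r \<longlonglongrightarrow> 1"
    and "\<And>t. t \<in> S \<Longrightarrow> u t \<in> K" "\<And>n t. t \<in> S \<Longrightarrow> of_real (r n) * u t \<in> K"
    and "\<And>t. norm (u t) = 1"
  shows "uniform_limit S (\<lambda>n t. Phi (of_real (r n) * u t)) (\<lambda>t. Phi (u t)) sequentially"
proof (rule uniform_limitI)
  fix e :: real assume "e > 0"
  then obtain d where "d > 0" and d: "\<And>z z'. z \<in> K \<Longrightarrow> z' \<in> K \<Longrightarrow> dist z' z < d \<Longrightarrow> dist (Phi z') (Phi z) < e"
    using assms(1) unfolding uniformly_continuous_on_def by metis
  have "\<forall>\<^sub>F n in sequentially. dist (r n) 1 < d"
    using assms(2) \<open>d > 0\<close> by (rule tendstoD)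
  then show "\<forall>\<^sub>F n in sequentially. \<forall>t\<in>S. dist (Phi (of_real (r n) * u t)) (Phi (u t)) < e"
  proof eventually_elim
    case (elim n)
    have "dist (of_real (r n) * u t) (u t) = dist (r n) 1" for t
    proof -
      have "of_real (r n) * u t - u t = of_real (r n - 1) * u t"
        by (simp add: algebra_simps)
      then have "norm (of_real (r n) * u t - u t) = \<bar>r n - 1\<bar> * norm (u t)"
        by (simp only: norm_mult norm_of_real)
      then show ?thesis
        using assms(5)[of t] by (simp add: dist_norm dist_real_def)
    qed
    then show ?case
      using elim assms(3,4) by (auto intro!: d)
  qed
qed

lemma has_vector_derivative_eval_fps_circle:
  fixes F :: "complex fps"
  assumes "ereal \<bar>r\<bar> < fps_conv_radius F"
  shows "((\<lambda>t. eval_fps F (of_real r * exp (\<i> * of_real t))) has_vector_derivative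
           \<i> * (of_real r * exp (\<i> * of_real t)) * eval_fps (fps_deriv F) (of_real r * exp (\<i> * of_real t))) (at t)"
proof -
  define z where "z = of_real r * exp (\<i> * of_real t)"
  have "norm z = \<bar>r\<bar>" by (simp add: z_def norm_mult norm_exp_eq_Re)
  have "((\<lambda>x. eval_fps F (of_real r * exp (\<i> * x))) has_field_derivative
          eval_fps (fps_deriv F) z * (of_real r * (exp (\<i> * of_real t) * \<i>))) (at (of_real t))"
    using has_field_derivative_eval_fps[of z F UNIV] assms \<open>norm z = \<bar>r\<bar>\<close>
    by (auto intro!: DERIV_chain2[where f = "eval_fps F"] derivative_eq_intros simp: z_def)
  from has_vector_derivative_real_field[OF this] show ?thesis
    by (simp add: z_def algebra_simps)
qed

lemma norm_one_minus_le_radial: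
  fixes u w :: complex
  assumes "norm u = 1" "0 \<le> \<rho>" "\<rho> \<le> 1"
  shows "norm (1 - w) \<le> norm (1 - of_real \<rho> * u) + norm (w - u) + (1 - \<rho>)"
proof -
  have "u - of_real \<rho> * u = of_real (1 - \<rho>) * u"
    by (simp add: algebra_simps)
  then have "norm (u - of_real \<rho> * u) = \<bar>1 - \<rho>\<bar> * norm u"
    by (simp only: norm_mult norm_of_real)
  then have "norm (u - of_real \<rho> * u) = 1 - \<rho>"
    using assms by simp
  moreover have "1 - w = (1 - of_real \<rho> * u) - (w - u) - (u - of_real \<rho> * u)"
    by simp
  then have "norm (1 - w) \<le> norm (1 - of_real \<rho> * u) + norm (w - u) + norm (u - of_real \<rho> * u)"
    by (metis norm_triangle_ineq4 add_right_mono order_trans)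
  ultimately show ?thesis by simp
qed

lemma radial_in_compact:
  fixes u w :: complex
  assumes "norm u = 1" "norm (w - u) < norm (1 - w) / 4" "1 - norm (1 - w) / 4 \<le> \<rho>" "\<rho> \<le> 1" "0 \<le> \<rho>"
  shows "of_real \<rho> * u \<in> cball 0 1 \<inter> {z. norm (1 - w) / 2 \<le> norm (1 - z)}"
  using norm_one_minus_le_radial[OF assms(1) assms(5,4), of w] assms by (simp add: norm_mult)

lemma obtain_radii:
  fixes c :: real
  assumes "0 < c" "c < 1"
  obtains r where "\<And>n. 1 - c \<le> r n" "\<And>n. 0 < r n" "\<And>n. r n < 1" "r \<longlonglongrightarrow> 1"
proof
  show "1 - c \<le> 1 - c / real (Suc n)" "0 < 1 - c / real (Suc n)" "1 - c / real (Suc n) < 1" for n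
    using assms by (auto simp: field_simps simp del: of_nat_Suc)
  have "(\<lambda>n. 1 - c * inverse (real (Suc n))) \<longlonglongrightarrow> 1 - c * 0"
    by (intro tendsto_intros LIMSEQ_inverse_real_of_nat)
  then show "(\<lambda>n. 1 - c / real (Suc n)) \<longlonglongrightarrow> 1"
    by (simp add: divide_inverse)
qed

lemma tendsto_radial:
  assumes "continuous_on cdisc_minus_one g" "u \<in> cdisc_minus_one" "norm u = 1"
    and "r \<longlonglongrightarrow> 1" "\<And>n. 0 < r n" "\<And>n. r n < 1"
  shows "(\<lambda>n. g (of_real (r n) * u)) \<longlonglongrightarrow> g u"
proof (rule continuous_on_tendsto_compose[OF assms(1) _ assms(2)])
  show "(\<lambda>n. of_real (r n) * u) \<longlonglongrightarrow> u"
    using tendsto_mult_right[OF tendsto_of_real[OF assms(4)], of u] by simp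
  have "of_real (r n) * u \<in> cdisc_minus_one" for n
  proof -
    have "norm (of_real (r n) * u) < 1"
      using assms(3) assms(5,6)[of n] by (simp add: norm_mult)
    then show ?thesis by (auto simp: mem_cdisc_minus_one)
  qed
  then show "\<forall>\<^sub>F n in sequentially. of_real (r n) * u \<in> cdisc_minus_one"
    by simp
qed

lemma has_vector_derivative_circle_compact:
  fixes F :: "complex fps" and Lw Phi :: "complex \<Rightarrow> complex"
  assumes radius: "1 \<le> fps_conv_radius F"
    and eval: "\<And>z. norm z < 1 \<Longrightarrow> eval_fps F z = Lw z"
    and cont: "continuous_on cdisc_minus_one Lw" "continuous_on cdisc_minus_one Phi"
    and deriv: "\<And>z. norm z < 1 \<Longrightarrow> \<i> * z * eval_fps (fps_deriv F) z = Phi z"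
    and S: "open S" "convex S" "\<sigma> \<in> S"
    and K: "compact K" "K \<subseteq> cdisc_minus_one"
    and r: "\<And>n. 0 < r n" "\<And>n. r n < 1" "r \<longlonglongrightarrow> 1"
    and in_K: "\<And>t. t \<in> S \<Longrightarrow> exp (\<i> * of_real t) \<in> K"
      "\<And>n t. t \<in> S \<Longrightarrow> of_real (r n) * exp (\<i> * of_real t) \<in> K"
  shows "((\<lambda>t. Lw (exp (\<i> * of_real t))) has_vector_derivative Phi (exp (\<i> * of_real \<sigma>))) (at \<sigma>)"
proof (rule has_vector_derivative_uniform_limit[OF S, where f = "\<lambda>n t. eval_fps F (of_real (r n) * exp (\<i> * of_real t))"])
  have norm_exp: "norm (exp (\<i> * of_real t)) = 1" for t by (simp add: norm_exp_eq_Re)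
  have inside: "norm (of_real (r n) * exp (\<i> * of_real t)) < 1" for n t
    using r(1,2)[of n] by (simp add: norm_mult norm_exp)
  show "((\<lambda>t. eval_fps F (of_real (r n) * exp (\<i> * of_real t))) has_vector_derivative
          Phi (of_real (r n) * exp (\<i> * of_real t))) (at t)" for n t
  proof -
    have "ereal \<bar>r n\<bar> < fps_conv_radius F"
      using r(1,2)[of n] radius by (metis abs_of_pos ereal_less(3) less_le_trans one_ereal_def)
    then show ?thesis
      using has_vector_derivative_eval_fps_circle[of "r n" F t] deriv[OF inside[of n t]] by simp
  qed
  show "uniform_limit S (\<lambda>n t. Phi (of_real (r n) * exp (\<i> * of_real t))) (\<lambda>t. Phi (exp (\<i> * of_real t)))
          sequentially"
    using compact_uniformly_continuous[OF continuous_on_subset[OF cont(2) K(2)] K(1)]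
    by (rule uniform_limit_radial[OF _ r(3) in_K norm_exp])
  show "(\<lambda>n. eval_fps F (of_real (r n) * exp (\<i> * of_real t))) \<longlonglongrightarrow> Lw (exp (\<i> * of_real t))"
    if "t \<in> S" for t
    using tendsto_radial[OF cont(1) _ norm_exp r(3,1,2)] in_K(1)[OF that] K(2) eval inside by auto
qed

text \<open>As \<open>e\<^sup>i\<^sup>\<sigma> \<noteq> 1\<close>, the radial approximations \<open>r\<^sub>n e\<^sup>i\<^sup>t\<close> with \<open>r\<^sub>n\<close> close to \<open>1\<close> stay in a
  compact subset of \<open>cdisc_minus_one\<close> for \<open>t\<close> near \<open>\<sigma>\<close>.\<close>
lemma has_vector_derivative_circle:
  fixes F :: "complex fps" and Lw Phi :: "complex \<Rightarrow> complex"
  assumes radius: "1 \<le> fps_conv_radius F"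
    and eval: "\<And>z. norm z < 1 \<Longrightarrow> eval_fps F z = Lw z"
    and cont: "continuous_on cdisc_minus_one Lw" "continuous_on cdisc_minus_one Phi"
    and deriv: "\<And>z. norm z < 1 \<Longrightarrow> \<i> * z * eval_fps (fps_deriv F) z = Phi z"
    and \<sigma>: "0 < \<sigma>" "\<sigma> < 2 * pi"
  shows "((\<lambda>t. Lw (exp (\<i> * of_real t))) has_vector_derivative Phi (exp (\<i> * of_real \<sigma>))) (at \<sigma>)"
proof -
  define u where "u t = exp (\<i> * of_real t)" for t
  have norm_u: "norm (u t) = 1" for t by (simp add: u_def norm_exp_eq_Re)
  define \<delta> where "\<delta> = norm (1 - u \<sigma>)"
  have "\<delta> > 0"
    using exp_circle_in_cdisc_minus_one[OF \<sigma>] by (simp add: \<delta>_def u_def mem_cdisc_minus_one)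
  have "isCont u \<sigma>" unfolding u_def by (intro continuous_intros)
  then obtain \<epsilon> where "\<epsilon> > 0" and \<epsilon>: "\<And>t. dist t \<sigma> < \<epsilon> \<Longrightarrow> dist (u t) (u \<sigma>) < \<delta> / 4"
    using \<open>\<delta> > 0\<close> unfolding continuous_at_eps_delta by (metis divide_pos_pos zero_less_numeral)
  define K where "K = cball (0::complex) 1 \<inter> {z. \<delta> / 2 \<le> norm (1 - z)}"
  have "compact K" unfolding K_def
    by (intro compact_Int_closed compact_cball closed_Collect_le continuous_intros)
  have "K \<subseteq> cdisc_minus_one" using \<open>\<delta> > 0\<close> by (auto simp: K_def mem_cdisc_minus_one)
  have "0 < min (\<delta> / 4) (1 / 2)" "min (\<delta> / 4) (1 / 2) < (1::real)"
    using \<open>\<delta> > 0\<close> by auto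
  then obtain r where r: "\<And>n. 1 - min (\<delta> / 4) (1 / 2) \<le> r n" "\<And>n. 0 < r n" "\<And>n. r n < 1" "r \<longlonglongrightarrow> 1"
    by (rule obtain_radii) blast
  have in_K: "of_real \<rho> * u t \<in> K" if "t \<in> ball \<sigma> \<epsilon>" "1 - min (\<delta> / 4) (1 / 2) \<le> \<rho>" "\<rho> \<le> 1" for t \<rho>
    using radial_in_compact[OF norm_u, of "u \<sigma>" t \<rho>] \<epsilon>[of t] that
    by (simp add: K_def \<delta>_def dist_norm dist_commute norm_minus_commute)
  show ?thesis
  proof (rule has_vector_derivative_circle_compact[OF radius eval cont deriv _ _ _ \<open>compact K\<close>
        \<open>K \<subseteq> cdisc_minus_one\<close> r(2-4)])
    show "exp (\<i> * of_real t) \<in> K" "of_real (r n) * exp (\<i> * of_real t) \<in> K" if "t \<in> ball \<sigma> \<epsilon>" for n t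
      using in_K[OF that, of 1] in_K[OF that r(1) less_imp_le[OF r(3)]] \<open>\<delta> > 0\<close> by (auto simp: u_def)
  qed (use \<open>\<epsilon> > 0\<close> in auto)
qed

section \<open>The map \<open>L\<close> on the unit circle\<close>

lemma ereal_norm_less_fps_conv_radius:
  "1 \<le> fps_conv_radius (p :: complex fps) \<Longrightarrow> norm z < 1 \<Longrightarrow> ereal (norm z) < fps_conv_radius p"
  by (metis ereal_less(3) less_le_trans one_ereal_def)

lemma one_le_fps_conv_radius_add:
  "1 \<le> fps_conv_radius (p :: complex fps) \<Longrightarrow> 1 \<le> fps_conv_radius q \<Longrightarrow> 1 \<le> fps_conv_radius (p + q)"
  using fps_conv_radius_add[of p q] by (metis min.bounded_iff order.trans)

lemma one_le_fps_conv_radius_mult: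
  "1 \<le> fps_conv_radius (p :: complex fps) \<Longrightarrow> 1 \<le> fps_conv_radius q \<Longrightarrow> 1 \<le> fps_conv_radius (p * q)"
  using fps_conv_radius_mult[of p q] by (metis min.bounded_iff order.trans)

lemma L_Nil [simp]: "L [] z = 0"
  by (simp add: L_def)

lemma L_Cons [simp]: "L ((c, u) # P) z = of_rat c * Lword u z + L P z"
  by (simp add: L_def)

lemma L_append [simp]: "L (P @ Q) z = L P z + L Q z"
  by (simp add: L_def)

lemma fps_conv_radius_poly_fps: "poly_in_H1 P \<Longrightarrow> 1 \<le> fps_conv_radius (poly_fps P)"
proof (induction P)
  case (Cons p P)
  then show ?case
    by (cases p) (auto intro!: one_le_fps_conv_radius_add one_le_fps_conv_radius_mult fps_conv_radius_word_fps)
qed simp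

lemma L_eq_eval_poly_fps:
  assumes "poly_in_H1 P" "norm z < 1"
  shows "L P z = eval_fps (poly_fps P) z"
  using assms(1)
proof (induction P)
  case (Cons p P)
  obtain c u where p: "p = (c, u)" by (cases p)
  have "in_H1 u" "poly_in_H1 P" using Cons.prems p by auto
  have radius: "ereal (norm z) < fps_conv_radius (fps_const (of_rat c) * word_fps u)"
    "ereal (norm z) < fps_conv_radius (poly_fps P)"
    using fps_conv_radius_word_fps[OF \<open>in_H1 u\<close>] fps_conv_radius_poly_fps[OF \<open>poly_in_H1 P\<close>] assms(2)
    by (auto intro!: ereal_norm_less_fps_conv_radius one_le_fps_conv_radius_mult)
  have "z \<in> cdisc_minus_one" using assms(2) by (auto simp: mem_cdisc_minus_one)
  then have "eval_fps (fps_const (of_rat c) * word_fps u) z = of_rat c * Lword u z"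
    using fps_conv_radius_word_fps[OF \<open>in_H1 u\<close>] assms(2) eval_word_fps[OF \<open>in_H1 u\<close>]
    by (subst eval_fps_mult) (auto intro: ereal_norm_less_fps_conv_radius)
  then show ?case
    using Cons.IH[OF \<open>poly_in_H1 P\<close>] p by (simp add: eval_fps_add radius)
qed simp

lemma continuous_on_L: "poly_in_H1 P \<Longrightarrow> continuous_on cdisc_minus_one (L P)"
proof (induction P)
  case (Cons p P)
  then show ?case
    by (cases p) (auto intro!: continuous_intros continuous_on_Lword)
qed (simp add: L_def)

lemma continuous_on_eq_on_dense:
  fixes g h :: "'a::first_countable_topology \<Rightarrow> 'b::t2_space"
  assumes "continuous_on T g" "continuous_on T h" "S \<subseteq> T" "T \<subseteq> closure S"
    and "\<And>x. x \<in> S \<Longrightarrow> g x = h x" "x \<in> T"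
  shows "g x = h x"
proof -
  obtain s where s: "\<And>n. s n \<in> S" "s \<longlonglongrightarrow> x"
    using assms(4,6) closure_sequential by blast
  have "\<forall>\<^sub>F n in sequentially. s n \<in> T"
    using s(1) assms(3) by (auto intro: always_eventually)
  then have "(\<lambda>n. g (s n)) \<longlonglongrightarrow> g x" "(\<lambda>n. h (s n)) \<longlonglongrightarrow> h x"
    using s(2) by (auto intro!: continuous_on_tendsto_compose[OF _ _ assms(6)] assms(1,2))
  then show ?thesis
    using assms(5)[OF s(1)] LIMSEQ_unique by auto
qed

text \<open>Shuffle multiplicativity, valid for the power series inside the disc, extends to its
  boundary by continuity.\<close>
lemma L_shuffle:
  assumes "poly_in_H1 P" "poly_in_H1 Q" "z \<in> cdisc_minus_one"
  shows "L (shuffle P Q) z = L P z * L Q z"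
proof (rule continuous_on_eq_on_dense[OF _ _ _ _ _ assms(3)])
  show "continuous_on cdisc_minus_one (L (shuffle P Q))"
    by (rule continuous_on_L[OF poly_in_H1_shuffle[OF assms(1,2)]])
  show "continuous_on cdisc_minus_one (\<lambda>z. L P z * L Q z)"
    by (intro continuous_intros continuous_on_L assms)
  show "ball 0 1 \<subseteq> cdisc_minus_one" "cdisc_minus_one \<subseteq> closure (ball 0 1)"
    by (auto simp: cdisc_minus_one_def)
  fix z :: complex assume "z \<in> ball 0 1"
  then have z: "norm z < 1" by simp
  have "L (shuffle P Q) z = eval_fps (poly_fps P * poly_fps Q) z"
    using L_eq_eval_poly_fps[OF poly_in_H1_shuffle[OF assms(1,2)] z] poly_fps_shuffle[OF assms(1,2)] by simp
  also have "\<dots> = eval_fps (poly_fps P) z * eval_fps (poly_fps Q) z"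
    using fps_conv_radius_poly_fps assms(1,2) z by (intro eval_fps_mult ereal_norm_less_fps_conv_radius)
  finally show "L (shuffle P Q) z = L P z * L Q z"
    using L_eq_eval_poly_fps[OF assms(1) z] L_eq_eval_poly_fps[OF assms(2) z] by simp
qed

lemma L_e1pow: "z \<in> cdisc_minus_one \<Longrightarrow> L (e1pow r) z = Li [1] z ^ r"
proof (induction r)
  case (Suc r)
  have "poly_in_H1 [(1, [E1])]" by (simp add: in_H1_def)
  moreover have "Lword [E1] z = Li [1] z" by (simp add: Lword_def word_idx_def)
  ultimately show ?case
    using L_shuffle[OF poly_in_H1_e1pow[of r] _ Suc.prems, of "[(1, [E1])]"] Suc by simp
qed (simp add: Lword_def)

lemma has_vector_derivative_Lword_snoc_E0:
  assumes "in_H1 u" "u \<noteq> []" and \<sigma>: "0 < \<sigma>" "\<sigma> < 2 * pi"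
  shows "((\<lambda>t. Lword (u @ [E0]) (exp (\<i> * of_real t))) has_vector_derivative
           \<i> * Lword u (exp (\<i> * of_real \<sigma>))) (at \<sigma>)"
proof (rule has_vector_derivative_circle[where F = "word_fps (u @ [E0])"])
  have H1: "in_H1 (u @ [E0])" using assms by (simp add: in_H1_snoc)
  show "1 \<le> fps_conv_radius (word_fps (u @ [E0]))"
    by (rule fps_conv_radius_word_fps[OF H1])
  show "eval_fps (word_fps (u @ [E0])) z = Lword (u @ [E0]) z" if "norm z < 1" for z
    using that by (intro eval_word_fps[OF H1]) (auto simp: mem_cdisc_minus_one)
  show "continuous_on cdisc_minus_one (Lword (u @ [E0]))"
    by (rule continuous_on_Lword[OF H1])
  show "continuous_on cdisc_minus_one (\<lambda>z. \<i> * Lword u z)"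
    by (intro continuous_intros continuous_on_Lword assms)
  show "\<i> * z * eval_fps (fps_deriv (word_fps (u @ [E0]))) z = \<i> * Lword u z" if "norm z < 1" for z
  proof -
    have "ereal (norm z) < fps_conv_radius (fps_deriv (word_fps (u @ [E0])))"
      using fps_conv_radius_word_fps[OF H1] fps_conv_radius_deriv[of "word_fps (u @ [E0])"] that
      by (intro ereal_norm_less_fps_conv_radius) (auto intro: order.trans)
    then have "z * eval_fps (fps_deriv (word_fps (u @ [E0]))) z
               = eval_fps (fps_X * fps_deriv (word_fps (u @ [E0]))) z"
      by (subst eval_fps_mult) auto
    also have "\<dots> = Lword u z"
      using assms(1,2) that fps_X_mult_deriv_word_fps_snoc_E0[of u]
      by (auto simp: in_H1_def mem_cdisc_minus_one intro!: eval_word_fps)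
    finally show ?thesis by (simp add: mult.assoc)
  qed
qed (use \<sigma> in auto)

definition app_E0 :: "hpoly \<Rightarrow> hpoly" where
  "app_E0 P = map (\<lambda>(c, u). (c, u @ [E0])) P"

definition nonempty_words :: "hpoly \<Rightarrow> bool" where
  "nonempty_words P \<longleftrightarrow> (\<forall>(c, u)\<in>set P. u \<noteq> [])"

lemma app_E0_Nil [simp]: "app_E0 [] = []"
  by (simp add: app_E0_def)

lemma app_E0_Cons [simp]: "app_E0 ((c, u) # P) = (c, u @ [E0]) # app_E0 P"
  by (simp add: app_E0_def)

lemma nonempty_words_Cons [simp]: "nonempty_words ((c, u) # P) \<longleftrightarrow> u \<noteq> [] \<and> nonempty_words P"
  by (simp add: nonempty_words_def)

lemma poly_in_H1_app_E0D: "poly_in_H1 (app_E0 P) \<Longrightarrow> poly_in_H1 P \<and> nonempty_words P"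
proof (induction P)
  case (Cons p P)
  then show ?case using in_H1_snoc_E0D by (cases p) auto
qed (simp add: nonempty_words_def)

lemma has_vector_derivative_L_app_E0:
  assumes "poly_in_H1 P" "nonempty_words P" "0 < \<sigma>" "\<sigma> < 2 * pi"
  shows "((\<lambda>t. L (app_E0 P) (exp (\<i> * of_real t))) has_vector_derivative
          \<i> * L P (exp (\<i> * of_real \<sigma>))) (at \<sigma>)"
  using assms(1,2)
proof (induction P)
  case (Cons p P)
  obtain c u where p: "p = (c, u)" by (cases p)
  then have "in_H1 u" "u \<noteq> []" "poly_in_H1 P" "nonempty_words P" using Cons.prems by auto
  have "((\<lambda>t. of_rat c * Lword (u @ [E0]) (exp (\<i> * of_real t)) + L (app_E0 P) (exp (\<i> * of_real t)))
         has_vector_derivative of_rat c * (\<i> * Lword u (exp (\<i> * of_real \<sigma>))) + \<i> * L P (exp (\<i> * of_real \<sigma>))) (at \<sigma>)"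
    using \<open>in_H1 u\<close> \<open>u \<noteq> []\<close> \<open>poly_in_H1 P\<close> \<open>nonempty_words P\<close> assms(3,4)
    by (intro has_vector_derivative_add has_vector_derivative_mult_right Cons.IH has_vector_derivative_Lword_snoc_E0)
  then show ?case using p by (simp add: algebra_simps)
qed simp

section \<open>The derivative of \<open>f\<close>\<close>

lemma wjr_Nil [simp]: "wjr [] [] = [(1, [])]"
  by (simp add: wjr_def)

lemma wjr_snoc:
  "wjr (J @ [t]) (R @ [\<rho>]) = map (\<lambda>(c, u). (c, u @ replicate (Suc t) E0)) (shuffle (wjr J R) (e1pow \<rho>))"
  by (simp add: wjr_def)

lemma map_append_replicate_Suc:
  "map (\<lambda>(c, u). (c, u @ replicate (Suc t) E0)) P = app_E0 (map (\<lambda>(c, u). (c, u @ replicate t E0)) P)"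
  by (induction P) (auto simp: replicate_append_same[symmetric])

lemma wjr_snoc_Suc: "wjr (J @ [Suc t]) (R @ [\<rho>]) = app_E0 (wjr (J @ [t]) (R @ [\<rho>]))"
  unfolding wjr_snoc by (subst map_append_replicate_Suc) simp

lemma wjr_snoc_0: "wjr (J @ [0]) (R @ [\<rho>]) = app_E0 (shuffle (wjr J R) (e1pow \<rho>))"
proof -
  have "map (\<lambda>(c, u). (c, u @ replicate 0 E0)) P = P" for P :: hpoly
    by (induction P) auto
  then show ?thesis
    unfolding wjr_snoc by (subst map_append_replicate_Suc) simp
qed

lemma length_e1pow: "(c, v) \<in> set (e1pow \<rho>) \<Longrightarrow> length v = \<rho>"
proof (induction \<rho> arbitrary: c v)
  case (Suc \<rho>)
  then obtain c' u where "(c', u) \<in> set (e1pow \<rho>)" "v \<in> set (shuf u [E1])"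
    by (auto simp: shuffle_def)
  then show ?case using Suc.IH length_shuf by fastforce
qed simp

lemma poly_in_H1_wjr:
  "length J = length R \<Longrightarrow> J \<noteq> [] \<Longrightarrow> 1 \<le> hd R \<Longrightarrow> poly_in_H1 (wjr J R) \<and> nonempty_words (wjr J R)"
proof (induction J arbitrary: R rule: rev_induct)
  case (snoc t J)
  obtain R' \<rho> where R: "R = R' @ [\<rho>]"
    using snoc.prems(1) by (metis length_0_conv neq_Nil_conv rev_exhaust snoc_eq_iff_butlast)
  have "length J = length R'" using snoc.prems(1) R by simp
  have IH: "poly_in_H1 (wjr J R') \<and> (J = [] \<or> nonempty_words (wjr J R'))"
  proof (cases "J = []")
    case True
    then show ?thesis using \<open>length J = length R'\<close> by (simp add: in_H1_def)
  next
    case False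
    then have "R' \<noteq> []" using \<open>length J = length R'\<close> by auto
    then have "1 \<le> hd R'" using snoc.prems(3) R by simp
    then show ?thesis using snoc.IH[OF \<open>length J = length R'\<close> False] by simp
  qed
  have "in_H1 w \<and> w \<noteq> []" if mem: "(e, w) \<in> set (shuffle (wjr J R') (e1pow \<rho>))" for e w
  proof -
    obtain c u d v where cu: "(c, u) \<in> set (wjr J R')" "(d, v) \<in> set (e1pow \<rho>)" "w \<in> set (shuf u v)"
      using shuffle_memD[OF mem] by blast
    have "in_H1 w"
      using poly_in_H1_shuffle[OF conjunct1[OF IH] poly_in_H1_e1pow] mem by (auto simp: poly_in_H1_def)
    moreover have "u \<noteq> [] \<or> v \<noteq> []"
    proof (cases "J = []")
      case True
      then have "1 \<le> \<rho>" using snoc.prems(3) R \<open>length J = length R'\<close> by simp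
      then show ?thesis using length_e1pow[OF cu(2)] by auto
    next
      case False
      then show ?thesis using IH cu(1) by (auto simp: nonempty_words_def)
    qed
    ultimately show ?thesis using length_shuf[OF cu(3)] by auto
  qed
  then show ?case
    unfolding R wjr_snoc by (fastforce simp: poly_in_H1_def nonempty_words_def in_H1_def)
qed simp

lemma prec_length: "prec j q \<Longrightarrow> length j = length q"
  by (simp add: prec_def)

lemma prec_sum_list: "prec j q \<Longrightarrow> sum_list j \<le> sum_list q"
  unfolding prec_def by (metis order_refl take_all)

lemma prec_Nil: "{j. prec j []} = {[]}"
  by (auto simp: prec_def)

lemma prec_snoc:
  assumes "length j = length q"
  shows "prec (j @ [t]) (q @ [x]) \<longleftrightarrow> prec j q \<and> sum_list j + t \<le> sum_list q + x"
proof -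
  have "(\<forall>s\<le>Suc (length q). sum_list (take s (j @ [t])) \<le> sum_list (take s (q @ [x])))
        \<longleftrightarrow> (\<forall>s\<le>length q. sum_list (take s j) \<le> sum_list (take s q)) \<and> sum_list j + t \<le> sum_list q + x"
    using assms by (auto simp: le_Suc_eq)
  then show ?thesis
    using assms by (simp add: prec_def)
qed

lemma finite_prec: "finite {j. prec j q}"
proof (rule finite_subset)
  show "{j. prec j q} \<subseteq> {j. set j \<subseteq> {0..sum_list q} \<and> length j = length q}"
    using member_le_sum_list prec_sum_list prec_length by fastforce
qed (rule finite_lists_length_eq, simp)

lemma sum_prec_snoc:
  fixes g :: "nat list \<Rightarrow> 'a::comm_monoid_add"
  shows "(\<Sum>j\<in>{j. prec j (q @ [x])}. g j) =
         (\<Sum>j\<in>{j. prec j q}. \<Sum>t\<le>sum_list q + x - sum_list j. g (j @ [t]))"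
proof -
  define A where "A = (SIGMA j:{j. prec j q}. {..sum_list q + x - sum_list j})"
  have "inj_on (\<lambda>(j, t). j @ [t]) A" by (auto simp: inj_on_def)
  moreover have "(\<lambda>(j, t). j @ [t]) ` A = {j. prec j (q @ [x])}"
  proof (intro equalityI subsetI)
    fix j' assume "j' \<in> (\<lambda>(j, t). j @ [t]) ` A"
    then show "j' \<in> {j. prec j (q @ [x])}"
      unfolding A_def using prec_snoc[OF prec_length] prec_sum_list by fastforce
  next
    fix j' assume "j' \<in> {j. prec j (q @ [x])}"
    then have "prec j' (q @ [x])" by simp
    then obtain j t where j': "j' = j @ [t]"
      using prec_length by (metis length_append_singleton length_greater_0_conv rev_exhaust zero_less_Suc)
    then have "length j = length q" using prec_length[OF \<open>prec j' (q @ [x])\<close>] by simp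
    then show "j' \<in> (\<lambda>(j, t). j @ [t]) ` A"
      using prec_snoc \<open>prec j' (q @ [x])\<close> unfolding A_def j' by force
  qed
  ultimately have "(\<Sum>j\<in>{j. prec j (q @ [x])}. g j) = (\<Sum>(j, t)\<in>A. g (j @ [t]))"
    by (metis (no_types, lifting) split_beta' sum.reindex_cong)
  also have "\<dots> = (\<Sum>j\<in>{j. prec j q}. \<Sum>t\<le>sum_list q + x - sum_list j. g (j @ [t]))"
    unfolding A_def by (rule sum.Sigma[symmetric]) (auto simp: finite_prec)
  finally show ?thesis .
qed

definition falling_coeff :: "nat \<Rightarrow> nat \<Rightarrow> complex" where
  "falling_coeff M t = (-1) ^ t * of_nat (fact M) / of_nat (fact (M - t))"

lemma falling_coeff_0 [simp]: "falling_coeff M 0 = 1"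
  by (simp add: falling_coeff_def)

lemma falling_coeff_Suc: "t < M \<Longrightarrow> falling_coeff M (Suc t) = - (of_nat (M - t) * falling_coeff M t)"
proof -
  assume "t < M"
  then have "M - t = Suc (M - Suc t)"
    by simp
  then have "(fact (M - t) :: nat) = (M - t) * fact (M - Suc t)"
    by (simp only: fact_Suc of_nat_id)
  then show ?thesis
    using \<open>t < M\<close> by (simp add: falling_coeff_def field_simps)
qed

lemma C_snoc:
  "C (q @ [x]) (j @ [t]) = falling_coeff (sum_list q + x - sum_list j) t * C q j"
  by (simp add: C_def falling_coeff_def add.commute diff_diff_eq)

lemma has_vector_derivative_i_power:
  "((\<lambda>s. (\<i> * of_real s) ^ k) has_vector_derivative of_nat k * (\<i> * of_real \<sigma>) ^ (k - 1) * \<i>) (at \<sigma>)"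
proof -
  have "((\<lambda>z. (\<i> * z) ^ k) has_field_derivative of_nat k * (\<i> * of_real \<sigma>) ^ (k - 1) * \<i>) (at (of_real \<sigma>))"
    using DERIV_chain2[OF DERIV_power[OF DERIV_ident] DERIV_cmult_Id[of \<i>], of k "of_real \<sigma>"]
    by simp
  then show ?thesis by (rule has_vector_derivative_real_field)
qed

text \<open>With the coefficients \<open>(-1)\<^sup>t M! / (M - t)!\<close>, differentiating the power of \<open>i\<sigma>\<close> in the
  \<open>t\<close>-th term cancels the derivative of the \<open>(t + 1)\<close>-st; only \<open>i (i\<sigma>)\<^sup>M\<close> times the derivative
  of the \<open>0\<close>-th term survives.\<close>
lemma has_vector_derivative_telescoping_sum:
  fixes l :: "nat \<Rightarrow> real \<Rightarrow> complex" and l' :: "nat \<Rightarrow> complex"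
  assumes l: "\<And>t. t \<le> M \<Longrightarrow> (l t has_vector_derivative l' t) (at \<sigma>)"
    and l'_0: "l' 0 = \<i> * c"
    and l'_Suc: "\<And>t. t < M \<Longrightarrow> l' (Suc t) = \<i> * l t \<sigma>"
  shows "((\<lambda>s. \<Sum>t\<le>M. falling_coeff M t * (\<i> * of_real s) ^ (M - t) * l t s) has_vector_derivative
           \<i> * (\<i> * of_real \<sigma>) ^ M * c) (at \<sigma>)"
proof -
  define w where "w = \<i> * complex_of_real \<sigma>"
  define a where "a t = falling_coeff M t * (of_nat (M - t) * w ^ (M - t - 1) * \<i> * l t \<sigma>)" for t
  define b where "b t = falling_coeff M t * (w ^ (M - t) * l' t)" for t
  have "((\<lambda>s. \<Sum>t\<le>M. falling_coeff M t * (\<i> * of_real s) ^ (M - t) * l t s) has_vector_derivative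
           (\<Sum>t\<le>M. a t + b t)) (at \<sigma>)"
  proof (rule has_vector_derivative_sum)
    fix t assume "t \<in> {..M}"
    then have "((\<lambda>s. falling_coeff M t * ((\<i> * of_real s) ^ (M - t) * l t s)) has_vector_derivative
            falling_coeff M t * (w ^ (M - t) * l' t + (of_nat (M - t) * w ^ (M - t - 1) * \<i>) * l t \<sigma>)) (at \<sigma>)"
      unfolding w_def
      by (intro has_vector_derivative_mult_right has_vector_derivative_mult has_vector_derivative_i_power l) simp
    then show "((\<lambda>s. falling_coeff M t * (\<i> * of_real s) ^ (M - t) * l t s) has_vector_derivative a t + b t) (at \<sigma>)"
      unfolding a_def b_def by (simp only: distrib_left add.commute mult.assoc)
  qed
  moreover have "(\<Sum>t\<le>M. a t + b t) = \<i> * w ^ M * c"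
  proof (cases M)
    case 0
    then show ?thesis by (simp add: a_def b_def l'_0)
  next
    case (Suc m)
    have "b (Suc t) = - a t" if "t \<le> m" for t
    proof -
      have "t < M" "M - Suc t = M - t - 1" using that Suc by simp_all
      then show ?thesis
        unfolding a_def b_def falling_coeff_Suc[OF \<open>t < M\<close>] l'_Suc[OF \<open>t < M\<close>]
        by (simp add: algebra_simps)
    qed
    then have "(\<Sum>t\<le>M. b t) = b 0 - (\<Sum>t\<le>m. a t)"
      unfolding Suc sum.atMost_Suc_shift by (simp add: sum_negf)
    moreover have "(\<Sum>t\<le>M. a t) = (\<Sum>t\<le>m. a t)"
      using Suc by (simp add: a_def)
    ultimately show ?thesis
      by (simp add: sum.distrib b_def l'_0 algebra_simps)
  qed
  ultimately show ?thesis by (simp add: w_def)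
qed

text \<open>The sum in the definition of \<open>f\<close>, with \<open>qb\<close> in the role of \<open>\<^bold>q\<close>-bar and \<open>R\<close> in that
  of \<open>\<^bold>r''\<close>.\<close>
definition f_inner :: "nat list \<Rightarrow> nat list \<Rightarrow> real \<Rightarrow> complex" where
  "f_inner qb R \<sigma> = (\<Sum>j\<in>{j. prec j qb}. C qb j * (\<i> * of_real \<sigma>) ^ (sum_list qb - sum_list j)
                      * L (wjr j R) (exp (\<i> * of_real \<sigma>)))"

lemma f_inner_Nil [simp]: "f_inner [] [] \<sigma> = 1"
  by (simp add: f_inner_def prec_Nil C_def Lword_def)

lemma f_inner_snoc:
  "f_inner (qb @ [x]) R \<sigma> = (\<Sum>j\<in>{j. prec j qb}. C qb j *
      (\<Sum>t\<le>sum_list qb + x - sum_list j. falling_coeff (sum_list qb + x - sum_list j) t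
          * (\<i> * of_real \<sigma>) ^ (sum_list qb + x - sum_list j - t) * L (wjr (j @ [t]) R) (exp (\<i> * of_real \<sigma>))))"
proof -
  have "sum_list (qb @ [x]) - sum_list (j @ [t]) = sum_list qb + x - sum_list j - t" for j t
    by simp
  then show ?thesis
    unfolding f_inner_def sum_prec_snoc sum_distrib_left C_snoc by (simp only: mult_ac)
qed

lemma poly_in_H1_wjr_if_hd_snoc:
  assumes "length J = length R" "1 \<le> hd (R @ [\<rho>])"
  shows "poly_in_H1 (wjr J R)"
proof (cases "J = []")
  case True
  then show ?thesis using assms(1) by (simp add: in_H1_def)
next
  case False
  then show ?thesis using poly_in_H1_wjr[OF assms(1) False] assms by (cases R) auto
qed

lemma has_vector_derivative_L_wjr_snoc_0:
  assumes "length J = length R" "1 \<le> hd (R @ [\<rho>])" "0 < \<sigma>" "\<sigma> < 2 * pi"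
  shows "((\<lambda>s. L (wjr (J @ [0]) (R @ [\<rho>])) (exp (\<i> * of_real s))) has_vector_derivative
           \<i> * (L (wjr J R) (exp (\<i> * of_real \<sigma>)) * Li [1] (exp (\<i> * of_real \<sigma>)) ^ \<rho>)) (at \<sigma>)"
proof -
  have E: "exp (\<i> * of_real \<sigma>) \<in> cdisc_minus_one"
    using assms(3,4) by (rule exp_circle_in_cdisc_minus_one)
  have "poly_in_H1 (shuffle (wjr J R) (e1pow \<rho>)) \<and> nonempty_words (shuffle (wjr J R) (e1pow \<rho>))"
    using poly_in_H1_app_E0D poly_in_H1_wjr[of "J @ [0]" "R @ [\<rho>]"] assms(1,2)
    by (simp add: wjr_snoc_0)
  then have "((\<lambda>s. L (app_E0 (shuffle (wjr J R) (e1pow \<rho>))) (exp (\<i> * of_real s))) has_vector_derivative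
              \<i> * L (shuffle (wjr J R) (e1pow \<rho>)) (exp (\<i> * of_real \<sigma>))) (at \<sigma>)"
    using assms(3,4) by (intro has_vector_derivative_L_app_E0) auto
  moreover have "L (shuffle (wjr J R) (e1pow \<rho>)) (exp (\<i> * of_real \<sigma>))
                 = L (wjr J R) (exp (\<i> * of_real \<sigma>)) * Li [1] (exp (\<i> * of_real \<sigma>)) ^ \<rho>"
    using L_shuffle[OF poly_in_H1_wjr_if_hd_snoc[OF assms(1,2)] poly_in_H1_e1pow E] L_e1pow[OF E] by simp
  ultimately show ?thesis by (simp add: wjr_snoc_0)
qed

lemma has_vector_derivative_L_wjr_snoc_Suc:
  assumes "length J = length R" "1 \<le> hd (R @ [\<rho>])" "0 < \<sigma>" "\<sigma> < 2 * pi"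
  shows "((\<lambda>s. L (wjr (J @ [Suc t]) (R @ [\<rho>])) (exp (\<i> * of_real s))) has_vector_derivative
           \<i> * L (wjr (J @ [t]) (R @ [\<rho>])) (exp (\<i> * of_real \<sigma>))) (at \<sigma>)"
proof -
  have "poly_in_H1 (wjr (J @ [t]) (R @ [\<rho>])) \<and> nonempty_words (wjr (J @ [t]) (R @ [\<rho>]))"
    using poly_in_H1_app_E0D poly_in_H1_wjr[of "J @ [Suc t]" "R @ [\<rho>]"] assms(1,2)
    by (simp add: wjr_snoc_Suc)
  then show ?thesis
    unfolding wjr_snoc_Suc using assms(3,4) by (intro has_vector_derivative_L_app_E0) auto
qed

lemma has_vector_derivative_f_inner:
  assumes "length qb = length R" "1 \<le> hd (R @ [\<rho>])" "0 < \<sigma>" "\<sigma> < 2 * pi"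
  shows "(f_inner (qb @ [x]) (R @ [\<rho>]) has_vector_derivative
           \<i> * (\<i> * of_real \<sigma>) ^ x * Li [1] (exp (\<i> * of_real \<sigma>)) ^ \<rho> * f_inner qb R \<sigma>) (at \<sigma>)"
proof -
  define E where "E = exp (\<i> * complex_of_real \<sigma>)"
  define M where "M j = sum_list qb + x - sum_list j" for j
  define l where "l j t s = L (wjr (j @ [t]) (R @ [\<rho>])) (exp (\<i> * of_real s))" for j t s
  have "(f_inner (qb @ [x]) (R @ [\<rho>]) has_vector_derivative
         (\<Sum>j\<in>{j. prec j qb}. C qb j * (\<i> * (\<i> * of_real \<sigma>) ^ M j * (L (wjr j R) E * Li [1] E ^ \<rho>)))) (at \<sigma>)"
  proof -
    have "((\<lambda>s. \<Sum>t\<le>M j. falling_coeff (M j) t * (\<i> * of_real s) ^ (M j - t) * l j t s) has_vector_derivative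
             \<i> * (\<i> * of_real \<sigma>) ^ M j * (L (wjr j R) E * Li [1] E ^ \<rho>)) (at \<sigma>)" if "prec j qb" for j
    proof (rule has_vector_derivative_telescoping_sum)
      have "length j = length R" using prec_length[OF that] assms(1) by simp
      show "(l j t has_vector_derivative (if t = 0 then \<i> * (L (wjr j R) E * Li [1] E ^ \<rho>) else \<i> * l j (t - 1) \<sigma>))
              (at \<sigma>)" for t
        using has_vector_derivative_L_wjr_snoc_0[OF \<open>length j = length R\<close> assms(2-4)]
          has_vector_derivative_L_wjr_snoc_Suc[OF \<open>length j = length R\<close> assms(2-4), of "t - 1"]
        by (cases t) (simp_all add: l_def[abs_def] E_def)
    qed auto
    then show ?thesis
      unfolding f_inner_snoc[abs_def] M_def[symmetric] l_def[symmetric]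
      by (intro has_vector_derivative_sum has_vector_derivative_mult_right) simp
  qed
  moreover have "(\<Sum>j\<in>{j. prec j qb}. C qb j * (\<i> * (\<i> * of_real \<sigma>) ^ M j * (L (wjr j R) E * Li [1] E ^ \<rho>)))
      = \<i> * (\<i> * of_real \<sigma>) ^ x * Li [1] E ^ \<rho> * f_inner qb R \<sigma>"
    unfolding f_inner_def sum_distrib_left E_def[symmetric]
  proof (rule sum.cong[OF refl])
    fix j assume "j \<in> {j. prec j qb}"
    then have M: "M j = x + (sum_list qb - sum_list j)" by (simp add: M_def prec_sum_list)
    show "C qb j * (\<i> * (\<i> * of_real \<sigma>) ^ M j * (L (wjr j R) E * Li [1] E ^ \<rho>)) =
          \<i> * (\<i> * of_real \<sigma>) ^ x * Li [1] E ^ \<rho> *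
          (C qb j * (\<i> * of_real \<sigma>) ^ (sum_list qb - sum_list j) * L (wjr j R) E)"
      unfolding M power_add by (simp only: mult_ac)
  qed
  ultimately show ?thesis by (simp add: E_def)
qed

definition n_zeros :: "nat list \<Rightarrow> nat" where
  "n_zeros r = length (takeWhile (\<lambda>x. x = 0) r)"

definition qbar :: "nat list \<Rightarrow> nat list \<Rightarrow> nat list" where
  "qbar q r = (sum_list (take (n_zeros r) q) + n_zeros r + hd (drop (n_zeros r) q)) # tl (drop (n_zeros r) q)"

lemma n_zeros_less_length: "\<not> (\<forall>y\<in>set r. y = 0) \<Longrightarrow> n_zeros r < length r"
proof -
  assume "\<not> (\<forall>y\<in>set r. y = 0)"
  then have "dropWhile (\<lambda>x. x = 0) r \<noteq> []" by (simp add: dropWhile_eq_Nil_conv)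
  moreover have "length (takeWhile (\<lambda>x. x = 0) r) + length (dropWhile (\<lambda>x. x = 0) r) = length r"
    by (metis length_append takeWhile_dropWhile_id)
  ultimately show ?thesis unfolding n_zeros_def by (cases "dropWhile (\<lambda>x. x = 0) r") auto
qed

lemma n_zeros_snoc: "\<not> (\<forall>y\<in>set r. y = 0) \<Longrightarrow> n_zeros (r @ [\<rho>]) = n_zeros r"
  unfolding n_zeros_def by (auto simp: takeWhile_append1)

lemma n_zeros_snoc_all_zero:
  "\<forall>y\<in>set r. y = 0 \<Longrightarrow> n_zeros (r @ [\<rho>]) = length r + (if \<rho> = 0 then 1 else 0)"
  unfolding n_zeros_def by (simp add: takeWhile_append2)

lemma hd_drop_n_zeros: "\<not> (\<forall>y\<in>set r. y = 0) \<Longrightarrow> 1 \<le> hd (drop (n_zeros r) r @ [\<rho>])"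
proof -
  assume "\<not> (\<forall>y\<in>set r. y = 0)"
  then have "dropWhile (\<lambda>x. x = 0) r \<noteq> []" by (simp add: dropWhile_eq_Nil_conv)
  moreover have "drop (n_zeros r) r = dropWhile (\<lambda>x. x = 0) r"
    unfolding n_zeros_def by (simp add: dropWhile_eq_drop)
  ultimately show ?thesis
    using hd_dropWhile[of "\<lambda>x. x = 0" r] by simp
qed

lemma f_all_zero:
  assumes "\<forall>y\<in>set r. y = 0" "length q = length r"
  shows "f q r \<sigma> = B q * (\<i> * of_real \<sigma>) ^ (sum_list q + length q)"
proof -
  have "takeWhile (\<lambda>x. x = 0) r = r" using assms(1) by (simp add: takeWhile_eq_all_conv)
  then show ?thesis
    unfolding f_def Let_def \<open>takeWhile (\<lambda>x. x = 0) r = r\<close> using assms(2) by (simp add: prec_Nil C_def L_def Lword_def)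
qed

lemma f_Nil: "f [] [] \<sigma> = 1"
  using f_all_zero[of "[]" "[]" \<sigma>] by (simp add: B_def)

lemma f_eq_f_inner:
  assumes "\<not> (\<forall>y\<in>set r. y = 0)" "length q = length r"
  shows "f q r \<sigma> = B (take (n_zeros r) q) * f_inner (qbar q r) (drop (n_zeros r) r) \<sigma>"
proof -
  define k where "k = n_zeros r"
  have "drop k q \<noteq> []"
    using n_zeros_less_length[OF assms(1)] assms(2) by (simp add: k_def)
  have "sum_list q = sum_list (take k q) + sum_list (drop k q)"
    by (metis append_take_drop_id sum_list_append)
  also have "sum_list (drop k q) = hd (drop k q) + sum_list (tl (drop k q))"
    using \<open>drop k q \<noteq> []\<close> by (metis list.collapse sum_list_simps(2))
  finally have "sum_list (qbar q r) = sum_list q + k"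
    by (simp add: qbar_def k_def)
  moreover have "f q r \<sigma> = B (take k q) * (\<Sum>j\<in>{j. prec j (qbar q r)}. C (qbar q r) j
      * (\<i> * of_real \<sigma>) ^ (sum_list q + k - sum_list j) * L (wjr j (drop k r)) (exp (\<i> * of_real \<sigma>)))"
    unfolding f_def Let_def n_zeros_def[symmetric] k_def using \<open>drop k q \<noteq> []\<close> by (simp add: qbar_def k_def)
  ultimately show ?thesis
    unfolding f_inner_def k_def by simp
qed

lemma B_snoc: "B (q @ [x]) = B q / of_nat (sum_list q + x + Suc (length q))"
  by (simp add: B_def add.commute)

lemma has_vector_derivative_f_all_zero:
  assumes "\<forall>y\<in>set r. y = 0" "length q = length r"
  shows "(f (q @ [x]) (r @ [0]) has_vector_derivative \<i> * (\<i> * of_real \<sigma>) ^ x * f q r \<sigma>) (at \<sigma>)"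
proof -
  define K where "K = sum_list q + x + Suc (length q)"
  define w where "w = \<i> * complex_of_real \<sigma>"
  have "f (q @ [x]) (r @ [0]) = (\<lambda>s. B (q @ [x]) * (\<i> * of_real s) ^ K)"
    using f_all_zero[of "r @ [0]" "q @ [x]"] assms by (auto simp: K_def)
  then have d: "(f (q @ [x]) (r @ [0]) has_vector_derivative B (q @ [x]) * (of_nat K * w ^ (K - 1) * \<i>)) (at \<sigma>)"
    unfolding w_def by (simp only: has_vector_derivative_mult_right[OF has_vector_derivative_i_power])
  have e1: "B (q @ [x]) * (of_nat K * w ^ (K - 1) * \<i>) = \<i> * w ^ x * (B q * w ^ (sum_list q + length q))"
  proof -
    have "(of_nat K :: complex) \<noteq> 0" by (simp add: K_def del: of_nat_Suc)
    moreover have "B (q @ [x]) = B q / of_nat K" unfolding B_snoc K_def ..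
    moreover have "K - 1 = x + (sum_list q + length q)" by (simp add: K_def)
    ultimately show ?thesis by (simp add: power_add field_simps)
  qed
  have e2: "\<i> * w ^ x * (B q * w ^ (sum_list q + length q)) = \<i> * (\<i> * of_real \<sigma>) ^ x * f q r \<sigma>"
    unfolding f_all_zero[OF assms, of \<sigma>] w_def ..
  show ?thesis
    using d unfolding e1 e2 .
qed

lemma has_vector_derivative_f_first_nonzero:
  assumes "\<forall>y\<in>set r. y = 0" "length q = length r" "1 \<le> \<rho>" "0 < \<sigma>" "\<sigma> < 2 * pi"
  shows "(f (q @ [x]) (r @ [\<rho>]) has_vector_derivative
           \<i> * (\<i> * of_real \<sigma>) ^ x * Li [1] (exp (\<i> * of_real \<sigma>)) ^ \<rho> * f q r \<sigma>) (at \<sigma>)"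
proof -
  define N where "N = sum_list q + length q + x"
  have nonzero: "\<not> (\<forall>y\<in>set (r @ [\<rho>]). y = 0)" and len: "length (q @ [x]) = length (r @ [\<rho>])"
    using assms(2,3) by auto
  have "n_zeros (r @ [\<rho>]) = length r"
    using n_zeros_snoc_all_zero[OF assms(1)] assms(3) by simp
  then have "qbar (q @ [x]) (r @ [\<rho>]) = [] @ [N]" "take (n_zeros (r @ [\<rho>])) (q @ [x]) = q"
    "drop (n_zeros (r @ [\<rho>])) (r @ [\<rho>]) = [] @ [\<rho>]"
    using assms(2) by (simp_all add: qbar_def N_def)
  then have eq: "f (q @ [x]) (r @ [\<rho>]) = (\<lambda>s. B q * f_inner ([] @ [N]) ([] @ [\<rho>]) s)"
    by (intro ext) (simp only: f_eq_f_inner[OF nonzero len])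
  have "(f_inner ([] @ [N]) ([] @ [\<rho>]) has_vector_derivative
      \<i> * (\<i> * of_real \<sigma>) ^ N * Li [1] (exp (\<i> * of_real \<sigma>)) ^ \<rho> * f_inner [] [] \<sigma>) (at \<sigma>)"
    using assms(3-5) by (intro has_vector_derivative_f_inner) auto
  then have d: "(f (q @ [x]) (r @ [\<rho>]) has_vector_derivative
      B q * (\<i> * (\<i> * of_real \<sigma>) ^ N * Li [1] (exp (\<i> * of_real \<sigma>)) ^ \<rho> * f_inner [] [] \<sigma>)) (at \<sigma>)"
    unfolding eq by (rule has_vector_derivative_mult_right)
  have e: "B q * (\<i> * (\<i> * of_real \<sigma>) ^ N * Li [1] (exp (\<i> * of_real \<sigma>)) ^ \<rho> * f_inner [] [] \<sigma>)
      = \<i> * (\<i> * of_real \<sigma>) ^ x * Li [1] (exp (\<i> * of_real \<sigma>)) ^ \<rho> * f q r \<sigma>"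
    unfolding f_all_zero[OF assms(1,2)] N_def f_inner_Nil power_add by (simp only: mult_ac mult_1_right mult_1_left)
  show ?thesis
    using d unfolding e .
qed

lemma has_vector_derivative_f_not_all_zero:
  assumes "\<not> (\<forall>y\<in>set r. y = 0)" "length q = length r" "0 < \<sigma>" "\<sigma> < 2 * pi"
  shows "(f (q @ [x]) (r @ [\<rho>]) has_vector_derivative
           \<i> * (\<i> * of_real \<sigma>) ^ x * Li [1] (exp (\<i> * of_real \<sigma>)) ^ \<rho> * f q r \<sigma>) (at \<sigma>)"
proof -
  define k where "k = n_zeros r"
  have "k < length r" unfolding k_def by (rule n_zeros_less_length[OF assms(1)])
  have nonzero: "\<not> (\<forall>y\<in>set (r @ [\<rho>]). y = 0)" and len: "length (q @ [x]) = length (r @ [\<rho>])"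
    using assms(1,2) by auto
  have "qbar (q @ [x]) (r @ [\<rho>]) = qbar q r @ [x]"
    "take (n_zeros (r @ [\<rho>])) (q @ [x]) = take k q"
    "drop (n_zeros (r @ [\<rho>])) (r @ [\<rho>]) = drop k r @ [\<rho>]"
    using \<open>k < length r\<close> assms(2) n_zeros_snoc[OF assms(1)] by (simp_all add: qbar_def k_def)
  then have eq: "f (q @ [x]) (r @ [\<rho>]) = (\<lambda>s. B (take k q) * f_inner (qbar q r @ [x]) (drop k r @ [\<rho>]) s)"
    by (intro ext) (simp only: f_eq_f_inner[OF nonzero len])
  have "length (qbar q r) = length (drop k r)"
    using \<open>k < length r\<close> assms(2) by (simp add: qbar_def k_def)
  then have "(f_inner (qbar q r @ [x]) (drop k r @ [\<rho>]) has_vector_derivative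
      \<i> * (\<i> * of_real \<sigma>) ^ x * Li [1] (exp (\<i> * of_real \<sigma>)) ^ \<rho> * f_inner (qbar q r) (drop k r) \<sigma>) (at \<sigma>)"
    using hd_drop_n_zeros[OF assms(1)] assms(3,4) unfolding k_def by (intro has_vector_derivative_f_inner)
  then have "(f (q @ [x]) (r @ [\<rho>]) has_vector_derivative
      B (take k q) * (\<i> * (\<i> * of_real \<sigma>) ^ x * Li [1] (exp (\<i> * of_real \<sigma>)) ^ \<rho> * f_inner (qbar q r) (drop k r) \<sigma>)) (at \<sigma>)"
    unfolding eq by (rule has_vector_derivative_mult_right)
  then show ?thesis
    unfolding f_eq_f_inner[OF assms(1,2)] k_def by (simp only: mult_ac)
qed

lemma has_vector_derivative_f:
  assumes "length q = length r" "0 < \<sigma>" "\<sigma> < 2 * pi"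
  shows "(f (q @ [x]) (r @ [\<rho>]) has_vector_derivative
           \<i> * (\<i> * of_real \<sigma>) ^ x * Li [1] (exp (\<i> * of_real \<sigma>)) ^ \<rho> * f q r \<sigma>) (at \<sigma>)"
proof (cases "\<forall>y\<in>set r. y = 0")
  case True
  show ?thesis
  proof (cases "\<rho> = 0")
    case True
    then show ?thesis
      using has_vector_derivative_f_all_zero[OF \<open>\<forall>y\<in>set r. y = 0\<close> assms(1)] by simp
  next
    case False
    then show ?thesis
      using has_vector_derivative_f_first_nonzero[OF \<open>\<forall>y\<in>set r. y = 0\<close> assms(1) _ assms(2,3)] by simp
  qed
next
  case False
  then show ?thesis
    by (rule has_vector_derivative_f_not_all_zero[OF _ assms])
qed

section \<open>The derivative of \<open>F\<close>\<close>

lemma blocks_snoc: "blocks (c @ [k]) xs = blocks c xs @ [take k (drop (sum_list c) xs)]"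
  by (induction c arbitrary: xs) (auto simp: add.commute)

lemma blocks_append: "sum_list c \<le> length xs \<Longrightarrow> blocks c (xs @ ys) = blocks c xs"
  by (induction c arbitrary: xs) auto

lemma length_blocks [simp]: "length (blocks c xs) = length c"
  by (induction c arbitrary: xs) auto

definition block_prod_f0 :: "nat list \<Rightarrow> nat list \<Rightarrow> nat list \<Rightarrow> complex" where
  "block_prod_f0 c q r = (\<Prod>j<length c. f (blocks c q ! j) (blocks c r ! j) 0)"

lemma block_prod_f0_snoc:
  "block_prod_f0 (c @ [k]) q r = block_prod_f0 c q r * f (take k (drop (sum_list c) q)) (take k (drop (sum_list c) r)) 0"
  unfolding block_prod_f0_def blocks_snoc by (simp add: nth_append)

lemma block_prod_f0_append:
  "sum_list c \<le> length q \<Longrightarrow> sum_list c \<le> length r \<Longrightarrow> block_prod_f0 c (q @ q') (r @ r') = block_prod_f0 c q r"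
  by (simp add: block_prod_f0_def blocks_append)

lemma length_le_sum_list_pos: "\<forall>k\<in>set c. 0 < k \<Longrightarrow> length c \<le> sum_list c"
  by (induction c) auto

lemma finite_comps: "finite (comps n)"
proof (rule finite_subset)
  show "comps n \<subseteq> {c. set c \<subseteq> {0..n} \<and> length c \<le> n}"
    using member_le_sum_list length_le_sum_list_pos unfolding comps_def by fastforce
qed (rule finite_lists_length_le, simp)

lemma comps_0: "comps 0 = {[]}"
proof -
  have "c = []" if "c \<in> comps 0" for c
    using that by (cases c) (auto simp: comps_def)
  then show ?thesis by (auto simp: comps_def)
qed

lemma comps_nonempty: "c \<in> comps n \<Longrightarrow> 0 < n \<Longrightarrow> c \<noteq> []"
  by (auto simp: comps_def)

lemma snoc_in_comps_iff: "c @ [k] \<in> comps n \<longleftrightarrow> c \<in> comps (n - k) \<and> 0 < k \<and> k \<le> n"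
  by (auto simp: comps_def)

lemma F_eq_sum_comps:
  assumes "q \<noteq> []" "length r = length q"
  shows "F q r \<sigma> = (\<Sum>c\<in>comps (length q). (-1) ^ length (butlast c) * block_prod_f0 (butlast c) q r *
      (f (drop (sum_list (butlast c)) q) (drop (sum_list (butlast c)) r) \<sigma>
       - f (drop (sum_list (butlast c)) q) (drop (sum_list (butlast c)) r) 0))"
  unfolding F_def Let_def using assms(1)
proof (simp only: if_False, intro sum.cong refl)
  fix c assume "c \<in> comps (length q)"
  moreover then have "c \<noteq> []" using comps_nonempty assms(1) by auto
  then obtain c' k where c: "c = c' @ [k]" by (metis rev_exhaust)
  ultimately have "sum_list c' + k = length q" by (simp add: comps_def)
  then have "blocks c q = blocks c' q @ [drop (sum_list c') q]" "blocks c r = blocks c' r @ [drop (sum_list c') r]"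
    using assms(2) by (simp_all add: c blocks_snoc)
  then show "(-1) ^ (length c - 1) * (\<Prod>j<length c - 1. f (blocks c q ! j) (blocks c r ! j) 0) *
          (f (blocks c q ! (length c - 1)) (blocks c r ! (length c - 1)) \<sigma> -
           f (blocks c q ! (length c - 1)) (blocks c r ! (length c - 1)) 0) =
        (-1) ^ length (butlast c) * block_prod_f0 (butlast c) q r *
          (f (drop (sum_list (butlast c)) q) (drop (sum_list (butlast c)) r) \<sigma> -
           f (drop (sum_list (butlast c)) q) (drop (sum_list (butlast c)) r) 0)"
    unfolding c block_prod_f0_def by (simp add: nth_append)
qed

definition inc_last :: "nat list \<Rightarrow> nat list" where
  "inc_last c = butlast c @ [Suc (last c)]"

lemma inj_on_inc_last: "inj_on inc_last (comps n - {[]})"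
proof (rule inj_onI)
  fix c c' assume "c \<in> comps n - {[]}" "c' \<in> comps n - {[]}" "inc_last c = inc_last c'"
  then have "butlast c = butlast c'" "last c = last c'" "c \<noteq> []" "c' \<noteq> []"
    by (auto simp: inc_last_def)
  then show "c = c'" by (metis append_butlast_last_id)
qed

lemma comps_Suc_last_one: "(\<lambda>c. c @ [1]) ` comps n = {c \<in> comps (Suc n). last c = 1}"
proof (intro equalityI subsetI)
  fix c assume c: "c \<in> {c \<in> comps (Suc n). last c = 1}"
  then have "c \<noteq> []" using comps_nonempty by auto
  then obtain c' k where "c = c' @ [k]" by (metis rev_exhaust)
  then show "c \<in> (\<lambda>c. c @ [1]) ` comps n"
    using c by (auto simp: snoc_in_comps_iff)
qed (auto simp: snoc_in_comps_iff)

lemma comps_Suc_last_not_one: "inc_last ` (comps n - {[]}) = {c \<in> comps (Suc n). last c \<noteq> 1}"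
proof (intro equalityI subsetI)
  fix c assume "c \<in> inc_last ` (comps n - {[]})"
  then obtain c' where c': "c' \<in> comps n" "c' \<noteq> []" "c = inc_last c'" by auto
  then obtain c'' k where "c' = c'' @ [k]" by (metis rev_exhaust)
  then show "c \<in> {c \<in> comps (Suc n). last c \<noteq> 1}"
    using c' by (auto simp: inc_last_def snoc_in_comps_iff)
next
  fix c assume c: "c \<in> {c \<in> comps (Suc n). last c \<noteq> 1}"
  then have "c \<noteq> []" using comps_nonempty by auto
  then obtain c' k where ck: "c = c' @ [k]" by (metis rev_exhaust)
  then have k: "c' \<in> comps (Suc n - k)" "0 < k" "k \<le> Suc n" "k \<noteq> 1"
    using c by (auto simp: snoc_in_comps_iff)
  then obtain k' where "k = Suc k'" "1 \<le> k'"
    by (metis One_nat_def Suc_le_eq gr0_implies_Suc neq0_conv)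
  then have "c' @ [k'] \<in> comps n" "c = inc_last (c' @ [k'])"
    using k ck by (simp_all add: snoc_in_comps_iff inc_last_def)
  then show "c \<in> inc_last ` (comps n - {[]})" by blast
qed

lemma sum_comps_Suc:
  "(\<Sum>c\<in>comps (Suc n). g c) = (\<Sum>c\<in>comps n. g (c @ [1])) + (\<Sum>c\<in>comps n - {[]}. g (inc_last c))"
proof -
  have "comps (Suc n) = {c \<in> comps (Suc n). last c = 1} \<union> {c \<in> comps (Suc n). last c \<noteq> 1}"
    by auto
  then have "(\<Sum>c\<in>comps (Suc n). g c) = (\<Sum>c\<in>{c \<in> comps (Suc n). last c = 1}. g c)
          + (\<Sum>c\<in>{c \<in> comps (Suc n). last c \<noteq> 1}. g c)"
    by (metis (no_types, lifting) finite_comps finite_Un sum.union_disjoint disjoint_iff mem_Collect_eq)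
  also have "\<dots> = (\<Sum>c\<in>comps n. g (c @ [1])) + (\<Sum>c\<in>comps n - {[]}. g (inc_last c))"
    unfolding comps_Suc_last_one[symmetric] comps_Suc_last_not_one[symmetric]
    by (simp add: sum.reindex inj_on_def sum.reindex[OF inj_on_inc_last])
  finally show ?thesis .
qed

lemma sum_comps_block_prod_f0:
  assumes "length q = n" "length r = n" "0 < n"
  shows "(\<Sum>c\<in>comps n. (-1) ^ length c * block_prod_f0 c q r)
       = - (\<Sum>c\<in>comps n. (-1) ^ length (butlast c) * block_prod_f0 (butlast c) q r
              * f (drop (sum_list (butlast c)) q) (drop (sum_list (butlast c)) r) 0)"
  unfolding sum_negf[symmetric]
proof (rule sum.cong[OF refl])
  fix c assume c: "c \<in> comps n"
  then obtain c' k where ck: "c = c' @ [k]"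
    using comps_nonempty assms(3) by (metis rev_exhaust)
  then have "sum_list c' + k = n" using c by (simp add: comps_def)
  then show "(-1) ^ length c * block_prod_f0 c q r
      = - ((-1) ^ length (butlast c) * block_prod_f0 (butlast c) q r
           * f (drop (sum_list (butlast c)) q) (drop (sum_list (butlast c)) r) 0)"
    using assms unfolding ck by (simp add: block_prod_f0_snoc)
qed

text \<open>Sorting the compositions of \<open>n + 1\<close> by whether the last block is \<open>1\<close> or longer turns the
  terms of the derivative of \<open>F (q @ [x]) (r @ [\<rho>])\<close> back into those of \<open>F q r\<close>.\<close>
lemma sum_comps_Suc_f_eq_F:
  assumes "length q = n" "length r = n"
  shows "(\<Sum>c\<in>comps (Suc n). (-1) ^ length (butlast c) * block_prod_f0 (butlast c) (q @ [x]) (r @ [\<rho>])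
            * f (drop (sum_list (butlast c)) q) (drop (sum_list (butlast c)) r) \<sigma>) = F q r \<sigma>"
    (is "(\<Sum>c\<in>comps (Suc n). ?g c) = _")
proof -
  define h where "h c s = f (drop (sum_list (butlast c)) q) (drop (sum_list (butlast c)) r) s" for c s
  have last_one: "(\<Sum>c\<in>comps n. ?g (c @ [1])) = (\<Sum>c\<in>comps n. (-1) ^ length c * block_prod_f0 c q r)"
    using assms by (intro sum.cong refl) (simp add: comps_def block_prod_f0_append f_Nil)
  have last_not_one: "(\<Sum>c\<in>comps n - {[]}. ?g (inc_last c))
      = (\<Sum>c\<in>comps n - {[]}. (-1) ^ length (butlast c) * block_prod_f0 (butlast c) q r * h c \<sigma>)"
  proof (rule sum.cong[OF refl])
    fix c assume c: "c \<in> comps n - {[]}"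
    then obtain c' k where "c = c' @ [k]" by (metis DiffD2 rev_exhaust singletonI)
    moreover have "sum_list c' \<le> n" using c calculation by (simp add: comps_def)
    ultimately show "?g (inc_last c) = (-1) ^ length (butlast c) * block_prod_f0 (butlast c) q r * h c \<sigma>"
      using assms by (simp add: inc_last_def h_def block_prod_f0_append)
  qed
  show ?thesis
  proof (cases "n = 0")
    case True
    then show ?thesis
      using assms last_one unfolding sum_comps_Suc by (simp add: comps_0 block_prod_f0_def F_def)
  next
    case False
    then have "q \<noteq> []" "comps n - {[]} = comps n" "length r = length q" "0 < n"
      using assms comps_nonempty by auto
    then show ?thesis
      unfolding sum_comps_Suc last_one last_not_one[unfolded \<open>comps n - {[]} = comps n\<close>]
        \<open>comps n - {[]} = comps n\<close> F_eq_sum_comps[OF \<open>q \<noteq> []\<close> \<open>length r = length q\<close>]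
        sum_comps_block_prod_f0[OF assms \<open>0 < n\<close>] assms h_def
      by (simp add: right_diff_distrib sum_subtractf)
  qed
qed

lemma has_vector_derivative_F_snoc:
  assumes "length q = length r" "0 < \<sigma>" "\<sigma> < 2 * pi"
  shows "(F (q @ [x]) (r @ [\<rho>]) has_vector_derivative
           \<i> * (\<i> * of_real \<sigma>) ^ x * Li [1] (exp (\<i> * of_real \<sigma>)) ^ \<rho> * F q r \<sigma>) (at \<sigma>)"
proof -
  define n where "n = length q"
  have len: "length q = n" "length r = n" using assms(1) by (simp_all add: n_def)
  define K where "K = \<i> * (\<i> * of_real \<sigma>) ^ x * Li [1] (exp (\<i> * of_real \<sigma>)) ^ \<rho>"
  define m where "m c = sum_list (butlast c)" for c :: "nat list"
  have "((\<lambda>s. f (drop (m c) (q @ [x])) (drop (m c) (r @ [\<rho>])) s - f (drop (m c) (q @ [x])) (drop (m c) (r @ [\<rho>])) 0)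
      has_vector_derivative K * f (drop (m c) q) (drop (m c) r) \<sigma>) (at \<sigma>)" if "c \<in> comps (Suc n)" for c
  proof -
    have "c \<noteq> []" using that comps_nonempty by auto
    then obtain c' k where "c = c' @ [k]" by (metis rev_exhaust)
    then have "m c \<le> n" using that by (simp add: m_def comps_def)
    then have "drop (m c) (q @ [x]) = drop (m c) q @ [x]" "drop (m c) (r @ [\<rho>]) = drop (m c) r @ [\<rho>]"
      using len by simp_all
    then have "(f (drop (m c) (q @ [x])) (drop (m c) (r @ [\<rho>])) has_vector_derivative
        K * f (drop (m c) q) (drop (m c) r) \<sigma>) (at \<sigma>)"
      using has_vector_derivative_f[of "drop (m c) q" "drop (m c) r", OF _ assms(2,3)] len by (simp add: K_def)
    then show ?thesis
      using has_vector_derivative_diff[OF _ has_vector_derivative_const] by fastforce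
  qed
  moreover have F_eq: "F (q @ [x]) (r @ [\<rho>]) = (\<lambda>s. \<Sum>c\<in>comps (Suc n). (-1) ^ length (butlast c) *
      block_prod_f0 (butlast c) (q @ [x]) (r @ [\<rho>]) *
      (f (drop (m c) (q @ [x])) (drop (m c) (r @ [\<rho>])) s - f (drop (m c) (q @ [x])) (drop (m c) (r @ [\<rho>])) 0))"
    using F_eq_sum_comps[of "q @ [x]" "r @ [\<rho>]"] len by (auto simp: m_def)
  ultimately have "(F (q @ [x]) (r @ [\<rho>]) has_vector_derivative (\<Sum>c\<in>comps (Suc n). (-1) ^ length (butlast c) *
      block_prod_f0 (butlast c) (q @ [x]) (r @ [\<rho>]) * (K * f (drop (m c) q) (drop (m c) r) \<sigma>))) (at \<sigma>)"
    unfolding F_eq by (intro has_vector_derivative_sum has_vector_derivative_mult_right)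
  also have "(\<Sum>c\<in>comps (Suc n). (-1) ^ length (butlast c) * block_prod_f0 (butlast c) (q @ [x]) (r @ [\<rho>]) *
      (K * f (drop (m c) q) (drop (m c) r) \<sigma>)) = K * F q r \<sigma>"
    unfolding sum_comps_Suc_f_eq_F[OF len, of x \<rho> \<sigma>, symmetric] m_def sum_distrib_left
    by (simp only: mult_ac)
  finally show ?thesis by (simp add: K_def)
qed

theorem proposition2:
  fixes q r :: "nat list" and \<sigma> :: real
  assumes "length q = length r" and "length q \<ge> 1"
    and "\<sigma> \<in> {0<..<2 * pi}"
  shows "(F q r has_vector_derivative
           (\<i> * (\<i> * complex_of_real \<sigma>) ^ last q * (Li [1] (exp (\<i> * complex_of_real \<sigma>))) ^ last r
              * F (butlast q) (butlast r) \<sigma>)) (at \<sigma>)"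
proof -
  have "q \<noteq> []" "r \<noteq> []" using assms(1,2) by auto
  then obtain q0 x r0 \<rho> where "q = q0 @ [x]" "r = r0 @ [\<rho>]"
    by (metis rev_exhaust)
  moreover have "length q0 = length r0" using assms(1) calculation by simp
  ultimately show ?thesis
    using has_vector_derivative_F_snoc[of q0 r0 \<sigma> x \<rho>] assms(3) by simp
qed

end
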